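(* Let $G>0$, $M\in\mathbb{R}$, $R>0$, $\chi\in\mathcal{C}^\infty_c(\mathbb{R}^3)$ with $\chi=1$ on $B_R(0)$, and $m(x)=-\frac{GM}{|x|}(1-\chi(x))$. Let $a\in L^2(\mathbb{R}^3)$ be real-valued and define $$\mathscr{J}\colon H^2(\mathbb{R}^3)\times L^2(\mathbb{R}^3)\to\mathbb{R},\quad \mathscr{J}(\tilde\Phi,\rho)=\langle a-\tfrac12\tilde\Phi\,|\,\rho\rangle_{L^2(\mathbb{R}^3)},$$ $$g\colon H^2(\mathbb{R}^3)\times L^2(\mathbb{R}^3)\to L^2(\mathbb{R}^3),\quad g(\tilde\Phi,\rho)=\triangle\tilde\Phi+\triangle m-4\pi G\rho .$$ Suppose $\mathscr{J}$ is stationary at $(\tilde\Phi_*,\rho_* )\in H^2(\mathbb{R}^3)\times L^2(\mathbb{R}^3)$ under the constraint $g=0$. Then there exists $\lambda\in L^2(\mathbb{R}^3)$ such that the functional $$\mathscr{J}^\lambda(\tilde\Phi,\rho)=\mathscr{J}(\tilde\Phi,\rho)+\langle\lambda\,|\,\triangle(\tilde\Phi+m)-4\pi G\rho\rangle_{L^2(\mathbb{R}^3)}$$ on $H^2(\mathbb{R}^3)\times L^2(\mathbb{R}^3)$ is stationary at $(\tilde\Phi_*,\rho_* )$. Moreover, $\lambda$ then satisfies $\triangle\lambda=\frac12\rho_*$ in $\mathcal{D}'(\mathbb{R}^3)$.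
   Context: All functions are real-valued. A point $y_0$ of a Banach space is a stationary point of a Fréchet differentiable functional $F$ if its Fréchet derivative vanishes: $DF(y_0)=0$. $\mathscr{J}$ is stationary at $y_*$ under the constraint $g=0$ if $g(y_* )=0$ and $y_*$ is a stationary point of the restriction of $\mathscr{J}$ to $g^{-1}(\{0\})$; since $g$ is affine and continuous, this means $D\mathscr{J}(y_* )(h)=0$ for all $h\in H^2\times L^2$ with $Dg(y_* )(h)=0$. *)

theory Defs
  imports "HOL-Analysis.Analysis"
begin

type_synonym R3 = "real^3"
type_synonym rfun = "R3 \<Rightarrow> real"
type_synonym pair = "rfun \<times> rfun"

definition pd :: "R3 \<Rightarrow> rfun \<Rightarrow> rfun" where
  "pd v f x = frechet_derivative f (at x) v"

fun iter_pd :: "R3 list \<Rightarrow> rfun \<Rightarrow> rfun" where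
  "iter_pd [] f = f"
| "iter_pd (d # ds) f = pd d (iter_pd ds f)"

definition smooth :: "rfun \<Rightarrow> bool" where
  "smooth f \<longleftrightarrow> (\<forall>ds. set ds \<subseteq> Basis \<longrightarrow> (\<forall>x. iter_pd ds f differentiable (at x)))"

definition test_fun :: "rfun \<Rightarrow> bool" where
  "test_fun \<phi> \<longleftrightarrow> smooth \<phi> \<and> compact (closure {x. \<phi> x \<noteq> 0})"

definition lap :: "rfun \<Rightarrow> rfun" where
  "lap f x = (\<Sum>b\<in>Basis. pd b (pd b f) x)"

definition L2 :: "rfun \<Rightarrow> bool" where
  "L2 f \<longleftrightarrow> f \<in> borel_measurable lborel \<and> integrable lborel (\<lambda>x. (f x)^2)"

definition ip :: "rfun \<Rightarrow> rfun \<Rightarrow> real" where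
  "ip f g = (LINT x|lborel. f x * g x)"

definition L2norm :: "rfun \<Rightarrow> real" where
  "L2norm f = sqrt (ip f f)"

definition weak_deriv :: "R3 list \<Rightarrow> rfun \<Rightarrow> rfun \<Rightarrow> bool" where
  "weak_deriv ds u v \<longleftrightarrow> (\<forall>\<phi>. test_fun \<phi> \<longrightarrow>
      (LINT x|lborel. u x * iter_pd ds \<phi> x) = (-1) ^ length ds * (LINT x|lborel. v x * \<phi> x))"

definition H2 :: "rfun \<Rightarrow> bool" where
  "H2 u \<longleftrightarrow> L2 u \<and> (\<forall>ds. set ds \<subseteq> Basis \<and> length ds \<le> 2 \<longrightarrow> (\<exists>v. L2 v \<and> weak_deriv ds u v))"

definition wd :: "R3 list \<Rightarrow> rfun \<Rightarrow> rfun" where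
  "wd ds u = (SOME v. L2 v \<and> weak_deriv ds u v)"

definition H2norm :: "rfun \<Rightarrow> real" where
  "H2norm u = sqrt (\<Sum>ds\<in>{ds. set ds \<subseteq> (Basis::R3 set) \<and> length ds \<le> 2}. (L2norm (wd ds u))^2)"

definition wlap :: "rfun \<Rightarrow> rfun" where
  "wlap u x = (\<Sum>b\<in>Basis. wd [b, b] u x)"

definition inS :: "pair \<Rightarrow> bool" where
  "inS y \<longleftrightarrow> H2 (fst y) \<and> L2 (snd y)"

definition pnorm :: "pair \<Rightarrow> real" where
  "pnorm y = H2norm (fst y) + L2norm (snd y)"

definition padd :: "pair \<Rightarrow> pair \<Rightarrow> pair" where
  "padd y h = ((\<lambda>x. fst y x + fst h x), (\<lambda>x. snd y x + snd h x))"

definition pscale :: "real \<Rightarrow> pair \<Rightarrow> pair" where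
  "pscale c h = ((\<lambda>x. c * fst h x), (\<lambda>x. c * snd h x))"

definition frechet_real :: "(pair \<Rightarrow> real) \<Rightarrow> pair \<Rightarrow> (pair \<Rightarrow> real) \<Rightarrow> bool" where
  "frechet_real F y L \<longleftrightarrow>
     (\<forall>h k c. inS h \<longrightarrow> inS k \<longrightarrow> L (padd h k) = L h + L k \<and> L (pscale c h) = c * L h)
   \<and> (\<exists>C. \<forall>h. inS h \<longrightarrow> \<bar>L h\<bar> \<le> C * pnorm h)
   \<and> (\<forall>\<epsilon>>0. \<exists>\<delta>>0. \<forall>h. inS h \<longrightarrow> pnorm h < \<delta> \<longrightarrow>
        \<bar>F (padd y h) - F y - L h\<bar> \<le> \<epsilon> * pnorm h)"

text \<open>L is the Frechet derivative at y of an L2-valued F on H2 x L2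
  (L2 elements are functions modulo a.e. equality, so identities hold up to L2-null functions).\<close>
definition frechet_L2 :: "(pair \<Rightarrow> rfun) \<Rightarrow> pair \<Rightarrow> (pair \<Rightarrow> rfun) \<Rightarrow> bool" where
  "frechet_L2 F y L \<longleftrightarrow>
     (\<forall>h. inS h \<longrightarrow> L2 (L h))
   \<and> (\<forall>h k c. inS h \<longrightarrow> inS k \<longrightarrow>
        (AE x in lborel. L (padd h k) x = L h x + L k x) \<and> (AE x in lborel. L (pscale c h) x = c * L h x))
   \<and> (\<exists>C. \<forall>h. inS h \<longrightarrow> L2norm (L h) \<le> C * pnorm h)
   \<and> (\<forall>\<epsilon>>0. \<exists>\<delta>>0. \<forall>h. inS h \<longrightarrow> pnorm h < \<delta> \<longrightarrow>
        L2norm (\<lambda>x. F (padd y h) x - F y x - L h x) \<le> \<epsilon> * pnorm h)"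

definition stationary :: "(pair \<Rightarrow> real) \<Rightarrow> pair \<Rightarrow> bool" where
  "stationary F y \<longleftrightarrow> inS y \<and> (\<exists>L. frechet_real F y L \<and> (\<forall>h. inS h \<longrightarrow> L h = 0))"

definition stationary_constr :: "(pair \<Rightarrow> real) \<Rightarrow> (pair \<Rightarrow> rfun) \<Rightarrow> pair \<Rightarrow> bool" where
  "stationary_constr F g y \<longleftrightarrow> inS y \<and> (AE x in lborel. g y x = 0) \<and>
     (\<exists>LF Lg. frechet_real F y LF \<and> frechet_L2 g y Lg \<and>
        (\<forall>h. inS h \<longrightarrow> (AE x in lborel. Lg h x = 0) \<longrightarrow> LF h = 0))"

end

theory Submission
  imports Defs
begin

text \<open>The constraint is affine and its derivative is onto in the density variable: for every
  direction \<open>u\<close> of the potential the pair \<open>(u, \<Delta>u / (4\<pi>G))\<close> is tangent to the constraint set.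
  Stationarity along these directions says \<open>\<langle>a - \<Phi>\<^sub>*/2, \<Delta>u\<rangle> = 2\<pi>G \<langle>u, \<rho>\<^sub>*\<rangle>\<close>, which is exactly
  what makes \<open>\<lambda> = (a - \<Phi>\<^sub>*/2) / (4\<pi>G)\<close> a Lagrange multiplier: the Lagrangian then changes
  only by the quadratic term \<open>-\<langle>h\<^sub>1, h\<^sub>2\<rangle>/2\<close>. Conversely, differentiating any stationary
  Lagrangian in a direction \<open>(\<phi>, 0)\<close> with \<open>\<phi>\<close> a test function gives \<open>\<langle>\<lambda>, \<Delta>\<phi>\<rangle> = \<langle>\<rho>\<^sub>*/2, \<phi>\<rangle>\<close>.
  Identifying Fr\'echet derivatives requires weak derivatives to be unique, i.e. the
  fundamental lemma of the calculus of variations, proved by mollifying indicators of boxes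
  with the bump \<open>\<chi>\<^sup>2\<close>.\<close>

section \<open>Partial derivatives and smooth functions\<close>

lemma iter_pd_append: "iter_pd (xs @ ys) f = iter_pd xs (iter_pd ys f)"
  by (induct xs) auto

lemma pd_eqI: "(f has_derivative D) (at x) \<Longrightarrow> pd v f x = D v"
  unfolding pd_def by (metis frechet_derivative_at)

lemma pd_cong_open:
  assumes "open U" "x \<in> U" "\<And>z. z \<in> U \<Longrightarrow> f z = g z"
  shows "pd v f x = pd v g x"
proof -
  have "(f has_derivative D) (at x) \<longleftrightarrow> (g has_derivative D) (at x)" for D
    using has_derivative_transform_within_open[of f D x UNIV U g]
      has_derivative_transform_within_open[of g D x UNIV U f] assms by auto
  then show ?thesis unfolding pd_def frechet_derivative_def by simp
qed

lemma pd_const: "pd v (\<lambda>_. c) x = 0"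
  by (rule pd_eqI[where D="\<lambda>_. 0", simplified]) (rule has_derivative_const)

lemma pd_add:
  assumes "f differentiable (at x)" "g differentiable (at x)"
  shows "pd v (\<lambda>z. f z + g z) x = pd v f x + pd v g x"
  using pd_eqI[OF has_derivative_add[OF assms[unfolded frechet_derivative_works]]]
  by (simp add: pd_def)

lemma pd_mult:
  assumes "f differentiable (at x)" "g differentiable (at x)"
  shows "pd v (\<lambda>z. f z * g z) x = pd v f x * g x + f x * pd v g x"
  using pd_eqI[OF has_derivative_mult[OF assms[unfolded frechet_derivative_works]]]
  by (simp add: pd_def)

lemma pd_cmult:
  assumes "f differentiable (at x)"
  shows "pd v (\<lambda>z. c * f z) x = c * pd v f x"
  using pd_eqI[OF has_derivative_mult_right[OF assms[unfolded frechet_derivative_works]]]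
  by (simp add: pd_def)

lemma pd_along_line:
  assumes "F differentiable (at (x + s *\<^sub>R v))"
  shows "((\<lambda>s. F (x + s *\<^sub>R v)) has_real_derivative pd v F (x + s *\<^sub>R v)) (at s)"
proof -
  let ?D = "frechet_derivative F (at (x + s *\<^sub>R v))"
  have F: "(F has_derivative ?D) (at (x + s *\<^sub>R v))"
    using assms frechet_derivative_works by blast
  have "((\<lambda>s. x + s *\<^sub>R v) has_derivative (\<lambda>h. h *\<^sub>R v)) (at s)"
    by (auto intro!: derivative_eq_intros)
  from has_derivative_compose[OF this F]
  have "((\<lambda>s. F (x + s *\<^sub>R v)) has_derivative (\<lambda>h. h * pd v F (x + s *\<^sub>R v))) (at s)"
    using linear_scale[OF has_derivative_linear[OF F]] by (simp add: o_def pd_def)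
  then show ?thesis
    unfolding has_field_derivative_def by (rule has_derivative_eq_rhs) (auto simp: fun_eq_iff)
qed

lemma pd_difference_quotient_LIMSEQ:
  assumes "F differentiable (at x)"
  shows "(\<lambda>n. (F (x + inverse (real (Suc n)) *\<^sub>R v) - F x) / inverse (real (Suc n))) \<longlonglongrightarrow> pd v F x"
proof -
  define t :: "nat \<Rightarrow> real" where "t n = inverse (real (Suc n))" for n
  have "((\<lambda>h. (F (x + h *\<^sub>R v) - F x) / h) \<longlongrightarrow> pd v F x) (at 0)"
    using pd_along_line[of F x 0 v] assms unfolding DERIV_def by simp
  moreover have "t \<longlonglongrightarrow> 0"
    unfolding t_def by (rule LIMSEQ_inverse_real_of_nat)
  moreover have "\<forall>n. t n \<in> UNIV - {0}"
    unfolding t_def by simp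
  ultimately have "((\<lambda>h. (F (x + h *\<^sub>R v) - F x) / h) \<circ> t) \<longlonglongrightarrow> pd v F x"
    using tendsto_at_iff_sequentially[of _ _ 0 UNIV] by blast
  then show ?thesis unfolding t_def o_def .
qed

lemma continuous_imp_borel_measurable_lborel:
  "continuous_on UNIV (f :: 'a::euclidean_space \<Rightarrow> real) \<Longrightarrow> f \<in> borel_measurable lborel"
  using borel_measurable_continuous_onI by (simp add: measurable_lborel1)

lemma pd_borel_measurable:
  assumes "\<And>x. F differentiable (at x)"
  shows "pd v F \<in> borel_measurable lborel"
proof (rule borel_measurable_LIMSEQ_real)
  show "(\<lambda>n. (F (x + inverse (real (Suc n)) *\<^sub>R v) - F x) / inverse (real (Suc n))) \<longlonglongrightarrow> pd v F x" for x
    using pd_difference_quotient_LIMSEQ assms by blast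
  have F: "continuous_on UNIV F"
    by (intro continuous_at_imp_continuous_on ballI differentiable_imp_continuous_within assms)
  have "continuous_on UNIV (\<lambda>x. (F (x + inverse (real (Suc n)) *\<^sub>R v) - F x) / inverse (real (Suc n)))" for n
    by (intro continuous_intros continuous_on_compose2[OF F]) auto
  then show "(\<lambda>x. (F (x + inverse (real (Suc n)) *\<^sub>R v) - F x) / inverse (real (Suc n)))
      \<in> borel_measurable lborel" for n
    by (rule continuous_imp_borel_measurable_lborel)
qed

lemma smooth_iter_pd: "smooth f \<Longrightarrow> set ds \<subseteq> Basis \<Longrightarrow> smooth (iter_pd ds f)"
  unfolding smooth_def
proof (intro allI impI)
  fix e :: "R3 list" and x
  assume "\<forall>ds. set ds \<subseteq> Basis \<longrightarrow> (\<forall>x. iter_pd ds f differentiable at x)"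
    and "set ds \<subseteq> Basis" "set e \<subseteq> Basis"
  then show "iter_pd e (iter_pd ds f) differentiable (at x)"
    by (metis iter_pd_append set_append sup.bounded_iff)
qed

lemma smooth_imp_differentiable: "smooth f \<Longrightarrow> f differentiable (at x)"
  unfolding smooth_def by (drule spec[of _ "[]"]) simp

lemma smooth_iter_pd_differentiable:
  "smooth f \<Longrightarrow> set ds \<subseteq> Basis \<Longrightarrow> iter_pd ds f differentiable (at x)"
  unfolding smooth_def by blast

lemma smooth_continuous: "smooth f \<Longrightarrow> continuous_on UNIV f"
  by (intro continuous_at_imp_continuous_on ballI differentiable_imp_continuous_within
      smooth_imp_differentiable)

lemma iter_pd_add:
  assumes "\<And>e x. set e \<subseteq> Basis \<Longrightarrow> length e < length ds \<Longrightarrow> iter_pd e f differentiable (at x)"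
    and "\<And>e x. set e \<subseteq> Basis \<Longrightarrow> length e < length ds \<Longrightarrow> iter_pd e g differentiable (at x)"
    and "set ds \<subseteq> Basis"
  shows "iter_pd ds (\<lambda>x. f x + g x) = (\<lambda>x. iter_pd ds f x + iter_pd ds g x)"
  using assms
proof (induct ds)
  case (Cons d ds)
  have "iter_pd ds (\<lambda>x. f x + g x) = (\<lambda>x. iter_pd ds f x + iter_pd ds g x)"
    using Cons by (metis Suc_lessD insert_subset length_Cons less_SucI list.simps(15))
  then show ?case using Cons(2-4) by (auto intro!: ext pd_add)
qed simp

text \<open>Induction on the number of derivatives: one derivative of \<open>f * g\<close> is a sum of two
  products of smooth functions.\<close>
lemma iter_pd_mult_differentiable:
  "smooth f \<Longrightarrow> smooth g \<Longrightarrow> set ds \<subseteq> Basis \<Longrightarrow> length ds \<le> n \<Longrightarrow>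
      iter_pd ds (\<lambda>x. f x * g x) differentiable (at x)"
proof (induct n arbitrary: f g ds x)
  case 0
  then show ?case by (auto intro!: differentiable_mult simp: smooth_imp_differentiable)
next
  case (Suc n f g ds x)
  note fg = Suc.prems(1,2)
  show ?case
  proof (cases ds rule: rev_cases)
    case Nil
    then show ?thesis using fg by (auto intro!: differentiable_mult simp: smooth_imp_differentiable)
  next
    case (snoc ds' d)
    have d: "d \<in> Basis" and ds': "set ds' \<subseteq> Basis" "length ds' \<le> n" using Suc.prems snoc by auto
    have sm: "smooth (pd d f)" "smooth (pd d g)" using fg d smooth_iter_pd[of _ "[d]"] by auto
    have A: "\<And>e x. set e \<subseteq> Basis \<Longrightarrow> length e \<le> n \<Longrightarrow> iter_pd e (\<lambda>x. pd d f x * g x) differentiable (at x)"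
      using Suc.hyps[of "pd d f" g] sm fg by blast
    have B: "\<And>e x. set e \<subseteq> Basis \<Longrightarrow> length e \<le> n \<Longrightarrow> iter_pd e (\<lambda>x. f x * pd d g x) differentiable (at x)"
      using Suc.hyps[of f "pd d g"] sm fg by blast
    have "pd d (\<lambda>x. f x * g x) = (\<lambda>x. pd d f x * g x + f x * pd d g x)"
      using fg by (auto intro!: ext pd_mult simp: smooth_imp_differentiable)
    then have "iter_pd ds (\<lambda>x. f x * g x) = iter_pd ds' (\<lambda>x. pd d f x * g x + f x * pd d g x)"
      using snoc by (simp add: iter_pd_append)
    also have "\<dots> = (\<lambda>x. iter_pd ds' (\<lambda>x. pd d f x * g x) x + iter_pd ds' (\<lambda>x. f x * pd d g x) x)"
      using ds' by (intro iter_pd_add A B) auto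
    finally show ?thesis using A[OF ds'] B[OF ds'] by (simp add: differentiable_add)
  qed
qed

lemma smooth_mult: "smooth f \<Longrightarrow> smooth g \<Longrightarrow> smooth (\<lambda>x. f x * g x)"
  unfolding smooth_def[of "\<lambda>x. f x * g x"] using iter_pd_mult_differentiable by blast

lemma iter_pd_affine:
  assumes "smooth f" "set ds \<subseteq> Basis"
  shows "iter_pd ds (\<lambda>x. f (c + s *\<^sub>R x)) = (\<lambda>x. s ^ length ds * iter_pd ds f (c + s *\<^sub>R x))"
  using assms(2)
proof (induct ds)
  case (Cons d ds)
  have "pd d (\<lambda>x. s ^ length ds * iter_pd ds f (c + s *\<^sub>R x)) x
      = s ^ length (d # ds) * iter_pd (d # ds) f (c + s *\<^sub>R x)" for x
  proof -
    let ?F = "iter_pd ds f"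
    let ?D = "frechet_derivative ?F (at (c + s *\<^sub>R x))"
    have F: "(?F has_derivative ?D) (at (c + s *\<^sub>R x))"
      using frechet_derivative_works[THEN iffD1, OF smooth_iter_pd_differentiable[OF assms(1)]] Cons(2)
      by simp
    have "((\<lambda>x. c + s *\<^sub>R x) has_derivative (\<lambda>h. s *\<^sub>R h)) (at x)"
      by (auto intro!: derivative_eq_intros)
    from has_derivative_compose[OF this F]
    have "((\<lambda>x. s ^ length ds * ?F (c + s *\<^sub>R x)) has_derivative (\<lambda>h. s ^ length ds * ?D (s *\<^sub>R h))) (at x)"
      by (intro has_derivative_mult_right) (simp add: o_def)
    from pd_eqI[OF this, of d] show ?thesis
      using linear_scale[OF has_derivative_linear[OF F]] by (simp add: pd_def mult_ac)
  qed
  then show ?case using Cons by auto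
qed simp

lemma smooth_affine: "smooth f \<Longrightarrow> smooth (\<lambda>x. f (c + s *\<^sub>R x))"
  unfolding smooth_def
proof (intro allI impI)
  fix ds :: "R3 list" and x
  assume f: "\<forall>ds. set ds \<subseteq> Basis \<longrightarrow> (\<forall>x. iter_pd ds f differentiable at x)"
    and ds: "set ds \<subseteq> Basis"
  have "(\<lambda>x. iter_pd ds f (c + s *\<^sub>R x)) differentiable (at x)"
    using differentiable_chain_at[of "\<lambda>x. c + s *\<^sub>R x" x "iter_pd ds f"] f ds by (simp add: o_def)
  then show "iter_pd ds (\<lambda>x. f (c + s *\<^sub>R x)) differentiable at x"
    using iter_pd_affine[of f ds c s] f ds by (simp add: smooth_def differentiable_mult)
qed


section \<open>Square integrable functions\<close>

lemma L2_borel_measurable: "L2 f \<Longrightarrow> f \<in> borel_measurable lborel"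
  unfolding L2_def by blast

lemma L2_integrable_mult:
  assumes "L2 u" "L2 w"
  shows "integrable lborel (\<lambda>x. u x * w x)"
proof (rule Bochner_Integration.integrable_bound)
  show "integrable lborel (\<lambda>x. (u x)^2 + (w x)^2)"
    using assms unfolding L2_def by auto
  show "AE x in lborel. norm (u x * w x) \<le> norm ((u x)^2 + (w x)^2)"
  proof (intro AE_I2)
    fix x
    have "0 \<le> (\<bar>u x\<bar> - \<bar>w x\<bar>)^2" by simp
    then have "2 * \<bar>u x * w x\<bar> \<le> (u x)^2 + (w x)^2"
      by (simp add: power2_diff power2_abs abs_mult)
    then show "norm (u x * w x) \<le> norm ((u x)^2 + (w x)^2)" by simp
  qed
qed (use assms in \<open>auto simp: L2_def\<close>)

lemma L2_add:
  assumes "L2 f" "L2 g"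
  shows "L2 (\<lambda>x. f x + g x)"
  unfolding L2_def
proof
  show "(\<lambda>x. f x + g x) \<in> borel_measurable lborel" using assms L2_borel_measurable by auto
  show "integrable lborel (\<lambda>x. (f x + g x)^2)"
  proof (rule Bochner_Integration.integrable_bound)
    show "integrable lborel (\<lambda>x. 2 * (f x)^2 + 2 * (g x)^2)" using assms unfolding L2_def by auto
    show "(\<lambda>x. (f x + g x)^2) \<in> borel_measurable lborel" using assms L2_borel_measurable by auto
    show "AE x in lborel. norm ((f x + g x)^2) \<le> norm (2 * (f x)^2 + 2 * (g x)^2)"
    proof (intro AE_I2)
      fix x
      have "0 \<le> (f x - g x)^2" by simp
      then have "(f x + g x)^2 \<le> 2 * (f x)^2 + 2 * (g x)^2" by (simp add: power2_sum power2_diff)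
      then show "norm ((f x + g x)^2) \<le> norm (2 * (f x)^2 + 2 * (g x)^2)" by simp
    qed
  qed
qed

lemma L2_cmult:
  assumes "L2 f"
  shows "L2 (\<lambda>x. c * f x)"
  using assms unfolding L2_def by (auto simp: power_mult_distrib)

lemma L2_diff:
  assumes "L2 f" "L2 g"
  shows "L2 (\<lambda>x. f x - g x)"
  using L2_add[OF assms(1) L2_cmult[OF assms(2), of "-1"]] by simp

lemma L2_zero: "L2 (\<lambda>x. 0)"
  unfolding L2_def by simp

lemma L2_sum: "finite S \<Longrightarrow> (\<And>b. b \<in> S \<Longrightarrow> L2 (f b)) \<Longrightarrow> L2 (\<lambda>x. \<Sum>b\<in>S. f b x)"
proof (induct S rule: finite_induct)
  case empty then show ?case using L2_zero by simp
next
  case (insert b S)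
  then show ?case using L2_add[of "f b" "\<lambda>x. \<Sum>b\<in>S. f b x"] by simp
qed

lemma L2_indicator:
  assumes "X \<in> sets lborel" "emeasure lborel X < \<infinity>"
  shows "L2 (indicator X :: rfun)"
proof -
  have "(\<lambda>x. (indicator X x :: real)^2) = indicator X" by (auto simp: indicator_def)
  then show ?thesis unfolding L2_def using assms integrable_real_indicator[OF assms] by simp
qed

lemma L2_integrable_mult_indicator:
  assumes "L2 v" "X \<in> sets lborel" "emeasure lborel X < \<infinity>"
  shows "integrable lborel (\<lambda>x. v x * indicator X x)"
  using L2_integrable_mult[OF assms(1) L2_indicator[OF assms(2,3)]] .

lemma integrable_abs_mult_indicator_compact:
  assumes "L2 v" "compact K"
  shows "integrable lborel (\<lambda>x. \<bar>v x\<bar> * indicator K x)"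
proof -
  have "integrable lborel (\<lambda>x. v x * indicator K x)"
    using assms by (intro L2_integrable_mult_indicator emeasure_compact_finite)
      (auto intro: borel_closed compact_imp_closed)
  then have "integrable lborel (\<lambda>x. \<bar>v x * indicator K x\<bar>)" by simp
  then show ?thesis by (simp add: abs_mult)
qed

lemma L2norm_cong_AE:
  assumes "f \<in> borel_measurable lborel" "g \<in> borel_measurable lborel" "AE x in lborel. f x = g x"
  shows "L2norm f = L2norm g"
proof -
  have "(LINT x|lborel. f x * f x) = (LINT x|lborel. g x * g x)"
    using assms by (intro integral_cong_AE) auto
  then show ?thesis unfolding L2norm_def ip_def by simp
qed

lemma L2norm_scale: "L2norm (\<lambda>x. t * f x) = \<bar>t\<bar> * L2norm f"
proof -
  have "(LINT x|lborel. t * f x * (t * f x)) = t^2 * (LINT x|lborel. f x * f x)"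
    by (simp add: power2_eq_square algebra_simps)
  then show ?thesis unfolding L2norm_def ip_def by (simp add: real_sqrt_mult)
qed

lemma L2norm_nonneg: "L2norm f \<ge> 0"
proof -
  have "(LINT x|lborel. f x * f x) \<ge> 0" by simp
  then show ?thesis unfolding L2norm_def ip_def by simp
qed

lemma L2norm_eq_0_AE:
  assumes "L2 f" "L2norm f = 0"
  shows "AE x in lborel. f x = 0"
proof -
  have i: "integrable lborel (\<lambda>x. (f x)^2)" using assms L2_def by blast
  have "(LINT x|lborel. (f x)^2) = 0" using assms(2) unfolding L2norm_def ip_def by (simp add: power2_eq_square)
  then have "AE x in lborel. (f x)^2 = 0" using integral_nonneg_eq_0_iff_AE[OF i] by simp
  then show ?thesis by simp
qed

lemma ip_scale_left: "ip (\<lambda>x. t * f x) g = t * ip f g"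
  unfolding ip_def by (simp add: mult.assoc)

lemma ip_scale_right: "ip f (\<lambda>x. t * g x) = t * ip f g"
  unfolding ip_def by (simp add: mult.left_commute)

lemma ip_comm: "ip f g = ip g f"
  unfolding ip_def by (simp add: mult.commute)

lemma ip_zero_right: "ip f (\<lambda>x. 0) = 0"
  unfolding ip_def by simp

lemma ip_add_right: "L2 f \<Longrightarrow> L2 g \<Longrightarrow> L2 h \<Longrightarrow> ip f (\<lambda>x. g x + h x) = ip f g + ip f h"
  unfolding ip_def using L2_integrable_mult by (simp add: distrib_left)

lemma ip_diff_left: "L2 f \<Longrightarrow> L2 g \<Longrightarrow> L2 h \<Longrightarrow> ip (\<lambda>x. f x - g x) h = ip f h - ip g h"
  unfolding ip_def using L2_integrable_mult by (simp add: left_diff_distrib)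

lemma ip_diff_right: "L2 f \<Longrightarrow> L2 g \<Longrightarrow> L2 h \<Longrightarrow> ip f (\<lambda>x. g x - h x) = ip f g - ip f h"
  unfolding ip_def using L2_integrable_mult by (simp add: right_diff_distrib)

lemma ip_cong_AE:
  assumes "f \<in> borel_measurable lborel" "g \<in> borel_measurable lborel" "h \<in> borel_measurable lborel"
    "AE x in lborel. g x = h x"
  shows "ip f g = ip f h"
  unfolding ip_def using assms by (intro integral_cong_AE) auto

lemma ip_bound:
  assumes "L2 f" "L2 g"
  shows "\<bar>ip f g\<bar> \<le> ((L2norm f)^2 + (L2norm g)^2) / 2"
proof -
  have i1: "integrable lborel (\<lambda>x. f x * g x)" using L2_integrable_mult assms by blast
  have i2: "integrable lborel (\<lambda>x. f x * f x)" "integrable lborel (\<lambda>x. g x * g x)" using L2_integrable_mult assms by blast+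
  have "\<bar>ip f g\<bar> \<le> (LINT x|lborel. \<bar>f x * g x\<bar>)" unfolding ip_def using i1 integral_abs_bound by blast
  also have "\<dots> \<le> (LINT x|lborel. (f x * f x + g x * g x) / 2)"
  proof (rule integral_mono)
    show "integrable lborel (\<lambda>x. \<bar>f x * g x\<bar>)" using i1 by simp
    show "integrable lborel (\<lambda>x. (f x * f x + g x * g x) / 2)" using i2 by simp
    fix x
    have "0 \<le> (\<bar>f x\<bar> - \<bar>g x\<bar>)^2" by simp
    then show "\<bar>f x * g x\<bar> \<le> (f x * f x + g x * g x) / 2"
      by (simp add: power2_diff abs_mult power2_eq_square[symmetric] power2_abs)
  qed
  also have "\<dots> = ((LINT x|lborel. f x * f x) + (LINT x|lborel. g x * g x)) / 2"
    using i2 by simp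
  also have "(LINT x|lborel. f x * f x) = (L2norm f)^2"
    unfolding L2norm_def ip_def by simp
  also have "(LINT x|lborel. g x * g x) = (L2norm g)^2"
    unfolding L2norm_def ip_def by simp
  finally show ?thesis .
qed

lemma ip_expand:
  assumes "L2 A" "L2 \<rho>" "L2 h1" "L2 h2"
  shows "ip (\<lambda>x. A x - h1 x / 2) (\<lambda>x. \<rho> x + h2 x) = ip A \<rho> + ip A h2 - ip h1 \<rho> / 2 - ip h1 h2 / 2"
proof -
  have half: "ip (\<lambda>x. h1 x / 2) g = ip h1 g / 2" for g
    using ip_scale_left[of "1/2" h1 g] by simp
  have "L2 (\<lambda>x. h1 x / 2)" using L2_cmult[OF assms(3), of "1/2"] by simp
  then have "ip (\<lambda>x. A x - h1 x / 2) (\<lambda>x. \<rho> x + h2 x)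
      = ip A (\<lambda>x. \<rho> x + h2 x) - ip h1 (\<lambda>x. \<rho> x + h2 x) / 2"
    using ip_diff_left[OF assms(1)] L2_add[OF assms(2,4)] half by simp
  then show ?thesis using assms by (simp add: ip_add_right add_divide_distrib)
qed


section \<open>Test functions\<close>

definition supp :: "rfun \<Rightarrow> R3 set" where
  "supp f = closure {x. f x \<noteq> 0}"

lemma zero_outside_supp: "x \<notin> supp f \<Longrightarrow> f x = 0"
  unfolding supp_def by (meson closure_subset mem_Collect_eq subsetD)

lemma compact_supp: "test_fun \<phi> \<Longrightarrow> compact (supp \<phi>)"
  unfolding test_fun_def supp_def by simp

lemma compact_closure_subset:
  fixes A :: "'a::heine_borel set"
  assumes "compact K" "closure A \<subseteq> K"
  shows "compact (closure A)"
proof -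
  have "A \<subseteq> K" using closure_subset assms(2) by (rule order_trans)
  then show ?thesis
    by (simp add: compact_closure bounded_subset[OF compact_imp_bounded[OF assms(1)]])
qed

lemma test_funI:
  assumes "smooth f" "compact K" "\<And>x. x \<notin> K \<Longrightarrow> f x = 0"
  shows "test_fun f"
proof -
  have "closure {x. f x \<noteq> 0} \<subseteq> K"
    using assms(2,3) by (intro closure_minimal compact_imp_closed) auto
  then show ?thesis
    unfolding test_fun_def using assms(1,2) compact_closure_subset by blast
qed

lemma iter_pd_outside_supp:
  assumes "set ds \<subseteq> Basis" "x \<notin> supp \<phi>"
  shows "iter_pd ds \<phi> x = 0"
  using assms
proof (induct ds arbitrary: x)
  case (Cons d ds)
  have "pd d (iter_pd ds \<phi>) x = pd d (\<lambda>_. 0) x"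
  proof (rule pd_cong_open[of "- supp \<phi>"])
    show "open (- supp \<phi>)" unfolding supp_def by (simp add: open_Compl)
    show "iter_pd ds \<phi> z = 0" if "z \<in> - supp \<phi>" for z
      using Cons.hyps[of z] Cons.prems(1) that by simp
  qed (use Cons.prems(2) in simp)
  then show ?case by (simp add: pd_const)
qed (simp add: zero_outside_supp)

lemma test_fun_iter_pd:
  assumes "test_fun \<phi>" "set ds \<subseteq> Basis"
  shows "test_fun (iter_pd ds \<phi>)"
proof (rule test_funI[OF _ compact_supp[OF assms(1)]])
  show "smooth (iter_pd ds \<phi>)" using assms smooth_iter_pd test_fun_def by blast
  show "iter_pd ds \<phi> x = 0" if "x \<notin> supp \<phi>" for x
    using iter_pd_outside_supp[OF assms(2) that] .
qed

lemma test_fun_pd: "test_fun \<phi> \<Longrightarrow> b \<in> Basis \<Longrightarrow> test_fun (pd b \<phi>)"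
  using test_fun_iter_pd[of \<phi> "[b]"] by simp

lemma test_fun_mult:
  assumes "test_fun \<phi>" "smooth \<psi>"
  shows "test_fun (\<lambda>x. \<phi> x * \<psi> x)"
proof (rule test_funI[OF _ compact_supp[OF assms(1)]])
  show "smooth (\<lambda>x. \<phi> x * \<psi> x)" using assms smooth_mult test_fun_def by blast
  show "\<phi> x * \<psi> x = 0" if "x \<notin> supp \<phi>" for x
    using zero_outside_supp[OF that] by simp
qed

lemma test_fun_square: "test_fun \<phi> \<Longrightarrow> test_fun (\<lambda>x. \<phi> x * \<phi> x)"
  using test_fun_mult test_fun_def by blast

lemma test_fun_affine:
  assumes "test_fun \<phi>" "s \<noteq> 0"
  shows "test_fun (\<lambda>x. \<phi> (c + s *\<^sub>R x))"
proof (rule test_funI)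
  show "smooth (\<lambda>x. \<phi> (c + s *\<^sub>R x))"
    using smooth_affine assms(1) unfolding test_fun_def by blast
  show "compact ((\<lambda>y. (1/s) *\<^sub>R (y - c)) ` supp \<phi>)"
    by (intro compact_continuous_image compact_supp assms continuous_intros)
  show "\<phi> (c + s *\<^sub>R x) = 0" if x: "x \<notin> (\<lambda>y. (1/s) *\<^sub>R (y - c)) ` supp \<phi>" for x
  proof (rule zero_outside_supp)
    have "x = (1/s) *\<^sub>R ((c + s *\<^sub>R x) - c)" using assms(2) by simp
    then show "c + s *\<^sub>R x \<notin> supp \<phi>" using x by blast
  qed
qed

lemma test_fun_continuous: "test_fun \<phi> \<Longrightarrow> continuous_on UNIV \<phi>"
  unfolding test_fun_def using smooth_continuous by blast

lemma test_fun_borel_measurable: "test_fun \<phi> \<Longrightarrow> \<phi> \<in> borel_measurable lborel"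
  using test_fun_continuous continuous_imp_borel_measurable_lborel by blast

lemma test_fun_bounded:
  assumes "test_fun \<phi>"
  obtains B where "\<And>x. \<bar>\<phi> x\<bar> \<le> B"
proof -
  have "compact (\<phi> ` supp \<phi>)"
    using compact_supp[OF assms] test_fun_continuous[OF assms]
    by (meson compact_continuous_image continuous_on_subset top_greatest)
  then obtain B where B: "\<And>y. y \<in> \<phi> ` supp \<phi> \<Longrightarrow> norm y \<le> B"
    using compact_imp_bounded bounded_iff by metis
  have "\<bar>\<phi> x\<bar> \<le> max B 0" for x
    using B[of "\<phi> x"] zero_outside_supp[of x \<phi>] by (cases "x \<in> supp \<phi>") auto
  then show ?thesis using that by blast
qed

lemma integrable_bounded_compact_support:
  fixes g :: "'a::euclidean_space \<Rightarrow> real"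
  assumes "g \<in> borel_measurable lborel" "\<And>x. \<bar>g x\<bar> \<le> B" "compact K" "\<And>x. x \<notin> K \<Longrightarrow> g x = 0"
  shows "integrable lborel g"
proof (rule Bochner_Integration.integrable_bound)
  show "integrable lborel (\<lambda>x. B * indicator K x)"
    using assms(3) by (intro integrable_mult_right integrable_real_indicator emeasure_compact_finite)
       (auto intro: borel_closed compact_imp_closed)
  show "AE x in lborel. norm (g x) \<le> norm (B * indicat_real K x)"
    using assms(2,4) by (intro AE_I2) (auto simp: indicator_def intro: order_trans[OF _ abs_ge_self])
qed (use assms in simp)

lemma test_fun_integrable: "test_fun \<phi> \<Longrightarrow> integrable lborel \<phi>"
  by (metis integrable_bounded_compact_support test_fun_bounded test_fun_borel_measurable
      compact_supp zero_outside_supp)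

lemma test_fun_L2: "test_fun \<phi> \<Longrightarrow> L2 \<phi>"
  unfolding L2_def using test_fun_borel_measurable test_fun_integrable[OF test_fun_square]
  by (simp add: power2_eq_square)

lemma L2_integrable_mult_test: "L2 u \<Longrightarrow> test_fun \<phi> \<Longrightarrow> integrable lborel (\<lambda>x. u x * \<phi> x)"
  using L2_integrable_mult test_fun_L2 by blast


section \<open>Integration by parts\<close>

lemma integral_translate:
  fixes F :: "'a::euclidean_space \<Rightarrow> real"
  assumes "F \<in> borel_measurable lborel"
  shows "(LINT x|lborel. F (x + c)) = (LINT x|lborel. F x)"
proof -
  have "(LINT x|lborel. F x) = integral\<^sup>L (distr lborel borel ((+) c)) F"
    by (simp add: lborel_distr_plus)
  also have "\<dots> = (LINT x|lborel. F (c + x))"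
    by (rule integral_distr) (use assms in \<open>auto simp: measurable_lborel1\<close>)
  finally show ?thesis by (simp add: add.commute)
qed

lemma integrable_translate:
  fixes F :: "'a::euclidean_space \<Rightarrow> real"
  assumes "integrable lborel F"
  shows "integrable lborel (\<lambda>x. F (x + c))"
proof -
  have "integrable (distr lborel borel ((+) c)) F"
    by (simp add: lborel_distr_plus assms)
  then show ?thesis
    by (subst (asm) integrable_distr_eq) (use assms in \<open>auto simp: measurable_lborel1 add.commute\<close>)
qed

lemma difference_quotient_bound:
  assumes F: "test_fun F" and b: "b \<in> Basis" and M: "\<And>x. \<bar>pd b F x\<bar> \<le> M"
    and t: "0 < t" "t \<le> 1"
  shows "\<bar>(F (x + t *\<^sub>R b) - F x) / t\<bar> \<le> M * indicator {x + y |x y. x \<in> supp F \<and> y \<in> cball 0 1} x"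
proof (cases "x \<in> {x + y |x y. x \<in> supp F \<and> y \<in> cball 0 1}")
  case True
  obtain z where "F (x + t *\<^sub>R b) - F (x + 0 *\<^sub>R b) = (t - 0) * pd b F (x + z *\<^sub>R b)"
    using MVT2[of 0 t "\<lambda>s. F (x + s *\<^sub>R b)" "\<lambda>s. pd b F (x + s *\<^sub>R b)"] F t
      pd_along_line smooth_imp_differentiable unfolding test_fun_def by blast
  then show ?thesis using M[of "x + z *\<^sub>R b"] True t by simp
next
  case False
  have "x \<notin> supp F"
  proof
    assume "x \<in> supp F"
    then have "x + 0 \<in> {x + y |x y. x \<in> supp F \<and> y \<in> cball 0 1}" by fastforce
    then show False using False by simp
  qed
  moreover have "x + t *\<^sub>R b \<notin> supp F"
  proof
    assume "x + t *\<^sub>R b \<in> supp F"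
    moreover have "norm (- (t *\<^sub>R b)) \<le> 1" using t b by simp
    ultimately have "(x + t *\<^sub>R b) + (- (t *\<^sub>R b)) \<in> {x + y |x y. x \<in> supp F \<and> y \<in> cball 0 1}"
      by fastforce
    then show False using False by simp
  qed
  ultimately show ?thesis using zero_outside_supp[of _ F] False by simp
qed

text \<open>The difference quotients of a test function have integral zero by translation invariance
  and are dominated, via the mean value theorem, by a multiple of the indicator of a compact set.\<close>
lemma integral_pd_test_fun:
  assumes F: "test_fun F" and b: "b \<in> Basis"
  shows "(LINT x|lborel. pd b F x) = 0"
proof -
  define t :: "nat \<Rightarrow> real" where "t n = inverse (real (Suc n))" for n
  have tpos: "0 < t n" "t n \<le> 1" for n unfolding t_def by (auto simp: inverse_le_1_iff)
  define Q where "Q n x = (F (x + t n *\<^sub>R b) - F x) / t n" for n x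
  have tr: "integrable lborel (\<lambda>x. F (x + t n *\<^sub>R b))" for n
    by (rule integrable_translate[OF test_fun_integrable[OF F]])
  have Qint: "(LINT x|lborel. Q n x) = 0" for n
    unfolding Q_def using tr test_fun_integrable[OF F]
      integral_translate[OF test_fun_borel_measurable[OF F]] by simp
  obtain M where M: "\<And>x. \<bar>pd b F x\<bar> \<le> M" using test_fun_bounded[OF test_fun_pd[OF F b]] by blast
  define K where "K = {x + y |x y. x \<in> supp F \<and> y \<in> cball (0::R3) 1}"
  have "(\<lambda>n. LINT x|lborel. Q n x) \<longlonglongrightarrow> (LINT x|lborel. pd b F x)"
  proof (rule integral_dominated_convergence[where w="\<lambda>x. M * indicator K x"])
    show "pd b F \<in> borel_measurable lborel"
      using test_fun_borel_measurable[OF test_fun_pd[OF F b]] .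
    show "Q n \<in> borel_measurable lborel" for n
      unfolding Q_def using tr[of n] test_fun_borel_measurable[OF F] by auto
    have "compact K" unfolding K_def by (intro compact_sums compact_supp F compact_cball)
    then show "integrable lborel (\<lambda>x. M * indicator K x)"
      by (intro integrable_mult_right integrable_real_indicator emeasure_compact_finite)
        (auto intro: borel_closed compact_imp_closed)
    show "AE x in lborel. (\<lambda>n. Q n x) \<longlonglongrightarrow> pd b F x"
      unfolding Q_def t_def using pd_difference_quotient_LIMSEQ smooth_imp_differentiable F
      by (simp add: test_fun_def)
    show "AE x in lborel. norm (Q n x) \<le> M * indicator K x" for n
      unfolding Q_def K_def using difference_quotient_bound[OF F b M tpos] by simp
  qed
  then show ?thesis using Qint by (simp add: LIMSEQ_const_iff)
qed

lemma integration_by_parts: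
  assumes "test_fun \<phi>" "test_fun \<psi>" "b \<in> Basis"
  shows "(LINT x|lborel. \<phi> x * pd b \<psi> x) = - (LINT x|lborel. pd b \<phi> x * \<psi> x)"
proof -
  have s: "smooth \<phi>" "smooth \<psi>" using assms test_fun_def by blast+
  have i1: "integrable lborel (\<lambda>x. pd b \<phi> x * \<psi> x)"
    using test_fun_integrable test_fun_mult test_fun_pd assms(1,3) s(2) by blast
  have i2: "integrable lborel (\<lambda>x. \<phi> x * pd b \<psi> x)"
    using test_fun_integrable test_fun_mult assms(1) test_fun_pd[OF assms(2,3)] test_fun_def by blast
  have "0 = (LINT x|lborel. pd b (\<lambda>x. \<phi> x * \<psi> x) x)"
    using integral_pd_test_fun[OF test_fun_mult[OF assms(1) s(2)] assms(3)] by simp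
  also have "\<dots> = (LINT x|lborel. pd b \<phi> x * \<psi> x + \<phi> x * pd b \<psi> x)"
    by (simp add: pd_mult smooth_imp_differentiable s)
  also have "\<dots> = (LINT x|lborel. pd b \<phi> x * \<psi> x) + (LINT x|lborel. \<phi> x * pd b \<psi> x)"
    using i1 i2 by simp
  finally show ?thesis by linarith
qed

lemma integration_by_parts_iter_pd:
  assumes "test_fun \<phi>" "test_fun \<psi>" "set ds \<subseteq> Basis"
  shows "(LINT x|lborel. \<phi> x * iter_pd ds \<psi> x)
       = (-1) ^ length ds * (LINT x|lborel. iter_pd (rev ds) \<phi> x * \<psi> x)"
  using assms
proof (induct ds arbitrary: \<phi>)
  case (Cons d ds \<phi>)
  have d: "d \<in> Basis" "set ds \<subseteq> Basis" using Cons.prems by auto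
  have "(LINT x|lborel. \<phi> x * iter_pd (d # ds) \<psi> x) = - (LINT x|lborel. pd d \<phi> x * iter_pd ds \<psi> x)"
    using integration_by_parts[OF Cons.prems(1) test_fun_iter_pd[OF Cons.prems(2) d(2)] d(1)] by simp
  also have "\<dots> = - ((-1) ^ length ds * (LINT x|lborel. iter_pd (rev ds) (pd d \<phi>) x * \<psi> x))"
    using Cons.hyps[OF test_fun_pd[OF Cons.prems(1) d(1)] Cons.prems(2) d(2)] by simp
  finally show ?case by (simp add: iter_pd_append)
qed simp

lemma test_fun_weak_deriv: "test_fun \<phi> \<Longrightarrow> set ds \<subseteq> Basis \<Longrightarrow> weak_deriv ds \<phi> (iter_pd (rev ds) \<phi>)"
  unfolding weak_deriv_def using integration_by_parts_iter_pd by blast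

lemma test_fun_H2:
  assumes "test_fun \<phi>"
  shows "H2 \<phi>"
  unfolding H2_def
proof (intro conjI allI impI)
  fix ds :: "R3 list"
  assume "set ds \<subseteq> Basis \<and> length ds \<le> 2"
  then show "\<exists>v. L2 v \<and> weak_deriv ds \<phi> v"
    using test_fun_weak_deriv[OF assms] test_fun_L2[OF test_fun_iter_pd[OF assms]] by (metis set_rev)
qed (rule test_fun_L2[OF assms])


section \<open>The fundamental lemma of the calculus of variations\<close>

lemma integral_affine_change:
  fixes F :: "'a::euclidean_space \<Rightarrow> real"
  assumes F: "F \<in> borel_measurable borel" and r: "r \<noteq> 0"
  shows "(LINT y|lborel. F (t + r *\<^sub>R y)) = (LINT c|lborel. F c) / \<bar>r\<bar> ^ DIM('a)"
proof -
  have T: "(\<lambda>x::'a. t + r *\<^sub>R x) \<in> lborel \<rightarrow>\<^sub>M borel"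
    by (simp add: measurable_lborel1)
  have "(LINT c|lborel. F c)
      = integral\<^sup>L (density (distr lborel borel (\<lambda>x. t + r *\<^sub>R x)) (\<lambda>x. ennreal (\<bar>r\<bar> ^ DIM('a)))) F"
    using lborel_affine[OF r, of t] by simp
  also have "\<dots> = integral\<^sup>L (distr lborel borel (\<lambda>x. t + r *\<^sub>R x)) (\<lambda>x. \<bar>r\<bar> ^ DIM('a) *\<^sub>R F x)"
    by (rule integral_density) (use F in auto)
  also have "\<dots> = \<bar>r\<bar> ^ DIM('a) * (LINT y|lborel. F (t + r *\<^sub>R y))"
    by (subst integral_distr[OF T]) (use F in auto)
  finally show ?thesis using r by simp
qed

lemma emeasure_density_lborel_eq_integral:
  fixes f :: "'a::euclidean_space \<Rightarrow> real"
  assumes "f \<in> borel_measurable lborel" "\<And>x. 0 \<le> f x" "integrable lborel (\<lambda>x. f x * indicator X x)"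
    and "X \<in> sets lborel"
  shows "emeasure (density lborel f) X = ennreal (LINT x|lborel. f x * indicator X x)"
proof -
  have "emeasure (density lborel f) X = (\<integral>\<^sup>+x. ennreal (f x) * indicator X x \<partial>lborel)"
    using assms by (subst emeasure_density) auto
  also have "\<dots> = (\<integral>\<^sup>+x. ennreal (f x * indicator X x) \<partial>lborel)"
    by (intro nn_integral_cong) (auto simp: indicator_def)
  also have "\<dots> = ennreal (LINT x|lborel. f x * indicator X x)"
    using assms by (intro nn_integral_eq_integral) auto
  finally show ?thesis .
qed

text \<open>The positive and negative parts of \<open>v\<close> define measures that agree on the
  \<open>\<inter>\<close>-stable generator of boxes, hence everywhere.\<close>
lemma AE_zero_if_box_integrals_zero:
  fixes v :: "'a::euclidean_space \<Rightarrow> real"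
  assumes vm: "v \<in> borel_measurable lborel"
    and vi: "\<And>a b. integrable lborel (\<lambda>x. v x * indicator (box a b) x)"
    and v0: "\<And>a b. (LINT x|lborel. v x * indicator (box a b) x) = 0"
  shows "AE x in lborel. v x = 0"
proof -
  define P where "P x = max 0 (v x)" for x
  define N where "N x = max 0 (- v x)" for x
  have Pm: "P \<in> borel_measurable lborel" "N \<in> borel_measurable lborel"
    unfolding P_def N_def using vm by auto
  have intP: "integrable lborel (\<lambda>x. P x * indicator (box a b) x)" for a b
  proof -
    have "(\<lambda>x. P x * indicator (box a b) x) = (\<lambda>x. max 0 (v x * indicator (box a b) x))"
      unfolding P_def by (auto simp: indicator_def)
    then show ?thesis using vi[of a b] by (simp add: integrable_max)
  qed
  have intN: "integrable lborel (\<lambda>x. N x * indicator (box a b) x)" for a b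
  proof -
    have "(\<lambda>x. N x * indicator (box a b) x) = (\<lambda>x. max 0 (- (v x * indicator (box a b) x)))"
      unfolding N_def by (auto simp: indicator_def)
    then show ?thesis using vi[of a b] by (simp add: integrable_max)
  qed
  have PN: "(LINT x|lborel. P x * indicator (box a b) x) = (LINT x|lborel. N x * indicator (box a b) x)"
    for a b
  proof -
    have "v x * indicator (box a b) x = P x * indicator (box a b) x - N x * indicator (box a b) x" for x
      unfolding P_def N_def by (auto simp: indicator_def)
    then show ?thesis using v0[of a b] intP intN by simp
  qed
  have em: "emeasure (density lborel P) (box a b) = emeasure (density lborel N) (box a b)" for a b
    using emeasure_density_lborel_eq_integral[OF Pm(1) _ intP] emeasure_density_lborel_eq_integral[OF Pm(2) _ intN]
      PN by (simp add: P_def N_def)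
  let ?E = "range (\<lambda>(a, b). box a b :: 'a set)"
  have "density lborel P = density lborel N"
  proof (rule measure_eqI_generator_eq[where E="?E" and \<Omega>=UNIV
        and A="\<lambda>n. box (- (real n *\<^sub>R One)) (real n *\<^sub>R One)"])
    show "Int_stable ?E" by (auto simp: Int_stable_def box_Int_box)
    show "sets (density lborel P) = sigma_sets UNIV ?E" "sets (density lborel N) = sigma_sets UNIV ?E"
      by (simp_all add: borel_eq_box)
    show "(\<Union>n. box (- (real n *\<^sub>R One)) (real n *\<^sub>R One)) = (UNIV :: 'a set)"
      using UN_box_eq_UNIV by auto
    show "emeasure (density lborel P) (box (- (real n *\<^sub>R One)) (real n *\<^sub>R One)) \<noteq> \<infinity>" for n
      using emeasure_density_lborel_eq_integral[OF Pm(1) _ intP] by (simp add: P_def)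
  qed (use em in auto)
  then have "AE x in lborel. ennreal (P x) = ennreal (N x)"
    using Pm by (intro sigma_finite_measure.density_unique[OF sigma_finite_lborel]) auto
  then show ?thesis
    by (rule AE_mp) (auto intro!: AE_I2 simp: P_def N_def max_def split: if_splits)
qed

text \<open>The bump is a parameter rather than constructed explicitly; in the main theorem it is
  \<open>\<chi>\<^sup>2\<close>.\<close>
locale bump =
  fixes \<psi> :: rfun
  assumes test_fun_bump: "test_fun \<psi>"
    and bump_nonneg: "\<And>x. 0 \<le> \<psi> x"
    and integral_bump_pos: "0 < (LINT x|lborel. \<psi> x)"
begin

definition mollify_indicator :: "R3 set \<Rightarrow> real \<Rightarrow> rfun" where
  "mollify_indicator B r x = (LINT c|lborel. indicator B c * \<psi> ((1 / r) *\<^sub>R (x - c)))"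

lemma test_fun_bump_scaled:
  assumes "r \<noteq> 0"
  shows "test_fun (\<lambda>c. \<psi> ((1 / r) *\<^sub>R (x - c)))" "test_fun (\<lambda>x. \<psi> ((1 / r) *\<^sub>R (x - c)))"
proof -
  have eq: "(\<lambda>c. \<psi> ((1 / r) *\<^sub>R (x - c))) = (\<lambda>c. \<psi> ((1 / r) *\<^sub>R x + (- (1 / r)) *\<^sub>R c))"
    "(\<lambda>x. \<psi> ((1 / r) *\<^sub>R (x - c))) = (\<lambda>x. \<psi> ((- (1 / r)) *\<^sub>R c + (1 / r) *\<^sub>R x))"
    by (simp_all add: scaleR_diff_right)
  show "test_fun (\<lambda>c. \<psi> ((1 / r) *\<^sub>R (x - c)))"
    unfolding eq by (rule test_fun_affine[OF test_fun_bump]) (use assms in simp)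
  show "test_fun (\<lambda>x. \<psi> ((1 / r) *\<^sub>R (x - c)))"
    unfolding eq by (rule test_fun_affine[OF test_fun_bump]) (use assms in simp)
qed

lemma integral_bump_scaled:
  assumes r: "0 < r"
  shows "(LINT c|lborel. \<psi> ((1 / r) *\<^sub>R (x - c))) = r ^ 3 * (LINT x|lborel. \<psi> x)"
proof -
  have "(LINT y|lborel. \<psi> ((1 / r) *\<^sub>R (x - (x + (- r) *\<^sub>R y))))
      = (LINT c|lborel. \<psi> ((1 / r) *\<^sub>R (x - c))) / \<bar>- r\<bar> ^ DIM(R3)"
    using r test_fun_borel_measurable[OF test_fun_bump_scaled(1)[of r x]]
    by (intro integral_affine_change) (auto simp: measurable_lborel1)
  then show ?thesis using r by (simp add: power3_eq_cube mult_ac)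
qed

lemma bump_scaled_eq_0:
  assumes "supp \<psi> \<subseteq> cball 0 K" "0 < r" "r * K < dist x c"
  shows "\<psi> ((1 / r) *\<^sub>R (x - c)) = 0"
proof (rule zero_outside_supp)
  have "norm ((1 / r) *\<^sub>R (x - c)) = norm (x - c) / r" using assms(2) by simp
  moreover have "r * K < norm (x - c)" using assms(3) by (simp add: dist_norm)
  ultimately have "K < norm ((1 / r) *\<^sub>R (x - c))" using assms(2) by (simp add: pos_less_divide_eq mult.commute)
  then show "(1 / r) *\<^sub>R (x - c) \<notin> supp \<psi>" using assms(1) by auto
qed

lemma mollify_indicator_nonneg: "0 \<le> mollify_indicator B r x"
  unfolding mollify_indicator_def using bump_nonneg by simp

lemma mollify_indicator_le:
  assumes "B \<in> sets lborel" "0 < r"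
  shows "mollify_indicator B r x \<le> r ^ 3 * (LINT x|lborel. \<psi> x)"
proof -
  have bump: "test_fun (\<lambda>c. \<psi> ((1 / r) *\<^sub>R (x - c)))"
    using test_fun_bump_scaled(1) assms(2) by simp
  have "integrable lborel (\<lambda>c. indicator B c * \<psi> ((1 / r) *\<^sub>R (x - c)))"
  proof (rule Bochner_Integration.integrable_bound[OF test_fun_integrable[OF bump]])
    show "(\<lambda>c. indicator B c * \<psi> ((1 / r) *\<^sub>R (x - c))) \<in> borel_measurable lborel"
      using test_fun_borel_measurable[OF bump] assms(1) by simp
  qed (use bump_nonneg in \<open>auto simp: indicator_def\<close>)
  then have "mollify_indicator B r x \<le> (LINT c|lborel. \<psi> ((1 / r) *\<^sub>R (x - c)))"
    unfolding mollify_indicator_def using test_fun_integrable[OF bump] bump_nonneg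
    by (intro integral_mono) (auto simp: indicator_def)
  then show ?thesis using integral_bump_scaled[OF assms(2)] by simp
qed

lemma mollify_indicator_eq_0:
  assumes "supp \<psi> \<subseteq> cball 0 K" "0 < r" "\<And>c. c \<in> B \<Longrightarrow> r * K < dist x c"
  shows "mollify_indicator B r x = 0"
proof -
  have "(\<lambda>c. indicator B c * \<psi> ((1 / r) *\<^sub>R (x - c))) = (\<lambda>c. 0)"
    using bump_scaled_eq_0[OF assms(1,2) assms(3)] by (auto simp: indicator_def)
  then show ?thesis unfolding mollify_indicator_def by simp
qed

lemma mollify_indicator_eq:
  assumes "supp \<psi> \<subseteq> cball 0 K" "0 < r" "cball x (r * K) \<subseteq> B"
  shows "mollify_indicator B r x = r ^ 3 * (LINT x|lborel. \<psi> x)"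
proof -
  have "indicator B c * \<psi> ((1 / r) *\<^sub>R (x - c)) = \<psi> ((1 / r) *\<^sub>R (x - c))" for c
  proof (cases "r * K < dist x c")
    case False
    then have "c \<in> B" using assms(3) by (auto simp: subset_iff)
    then show ?thesis by simp
  qed (use bump_scaled_eq_0[OF assms(1,2)] in simp)
  then have "mollify_indicator B r x = (LINT c|lborel. \<psi> ((1 / r) *\<^sub>R (x - c)))"
    unfolding mollify_indicator_def by presburger
  then show ?thesis using integral_bump_scaled[OF assms(2)] by simp
qed

lemma mollify_box_le:
  assumes K: "supp \<psi> \<subseteq> cball 0 K" "0 \<le> K" and r: "0 < r" "r \<le> 1"
  shows "mollify_indicator (box a b) r x
    \<le> r ^ 3 * (LINT x|lborel. \<psi> x) * indicator {y + z |y z. y \<in> cbox a b \<and> z \<in> cball 0 K} x"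
proof (cases "x \<in> {y + z |y z. y \<in> cbox a b \<and> z \<in> cball 0 K}")
  case True
  then show ?thesis using mollify_indicator_le[OF _ r(1)] by simp
next
  case False
  have "mollify_indicator (box a b) r x = 0"
  proof (rule mollify_indicator_eq_0[OF K(1) r(1)])
    fix c assume c: "c \<in> box a b"
    show "r * K < dist x c"
    proof (rule ccontr)
      assume "\<not> r * K < dist x c"
      moreover have "r * K \<le> K" using K(2) r by (simp add: mult_left_le_one_le)
      ultimately have "x - c \<in> cball 0 K" by (simp add: dist_norm norm_minus_commute)
      moreover have "c \<in> cbox a b" using c box_subset_cbox by blast
      ultimately have "c + (x - c) \<in> {y + z |y z. y \<in> cbox a b \<and> z \<in> cball 0 K}" by blast
      then show False using False by simp
    qed
  qed
  then show ?thesis using False by simp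
qed

lemma integrable_bump_kernel:
  assumes v: "L2 v" and K: "supp \<psi> \<subseteq> cball 0 K" "0 \<le> K" and r: "0 < r" "r \<le> 1"
  shows "integrable (lborel \<Otimes>\<^sub>M lborel)
    (\<lambda>(x, c). v x * (indicator (box a b) c * \<psi> ((1 / r) *\<^sub>R (x - c))))" (is "integrable _ ?f")
proof (rule lborel_pair.Fubini_integrable)
  have "continuous_on UNIV (\<lambda>p::R3 \<times> R3. \<psi> ((1 / r) *\<^sub>R (fst p - snd p)))"
    by (rule continuous_on_compose2[OF test_fun_continuous[OF test_fun_bump]])
      (auto intro!: continuous_intros)
  then have "(\<lambda>p::R3 \<times> R3. \<psi> ((1 / r) *\<^sub>R (fst p - snd p))) \<in> borel_measurable (lborel \<Otimes>\<^sub>M lborel)"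
    unfolding lborel_prod by (rule continuous_imp_borel_measurable_lborel)
  moreover have "(\<lambda>p::R3 \<times> R3. v (fst p)) \<in> borel_measurable (lborel \<Otimes>\<^sub>M lborel)"
    by (rule measurable_compose[OF measurable_fst L2_borel_measurable[OF v]])
  moreover have "(\<lambda>p::R3 \<times> R3. indicator (box a b) (snd p) :: real) \<in> borel_measurable (lborel \<Otimes>\<^sub>M lborel)"
    by (rule measurable_compose[OF measurable_snd]) simp
  ultimately have "(\<lambda>p. v (fst p) * (indicator (box a b) (snd p) * \<psi> ((1 / r) *\<^sub>R (fst p - snd p))))
      \<in> borel_measurable (lborel \<Otimes>\<^sub>M lborel)"
    by (intro borel_measurable_times)
  then show fm: "?f \<in> borel_measurable (lborel \<Otimes>\<^sub>M lborel)"
    by (simp add: case_prod_beta)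
  have eq: "(LINT c|lborel. norm (?f (x, c))) = \<bar>v x\<bar> * mollify_indicator (box a b) r x" for x
    unfolding mollify_indicator_def using bump_nonneg by (simp add: abs_mult)
  have "compact {y + z |y z. y \<in> cbox a b \<and> z \<in> cball (0::R3) K}"
    by (intro compact_sums compact_cbox compact_cball)
  note dom = integrable_mult_right[OF integrable_abs_mult_indicator_compact[OF v this]]
  have "(\<lambda>x. LINT c|lborel. norm (?f (x, c))) \<in> borel_measurable lborel"
    using fm by (intro lborel.borel_measurable_lebesgue_integral) (simp add: case_prod_beta')
  then show "integrable lborel (\<lambda>x. LINT c|lborel. norm (?f (x, c)))"
    unfolding eq
  proof (rule Bochner_Integration.integrable_bound[OF dom])
    show "AE x in lborel. norm (\<bar>v x\<bar> * mollify_indicator (box a b) r x)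
        \<le> norm (r ^ 3 * (LINT x|lborel. \<psi> x)
          * (\<bar>v x\<bar> * indicator {y + z |y z. y \<in> cbox a b \<and> z \<in> cball 0 K} x))"
      using mollify_box_le[OF K r] mollify_indicator_nonneg integral_bump_pos r(1)
      by (intro AE_I2) (simp add: abs_mult mult_left_mono mult.left_commute)
  qed
  have "integrable lborel (\<lambda>c. indicator (box a b) c * \<psi> ((1 / r) *\<^sub>R (x - c)))" for x
  proof -
    have bump: "test_fun (\<lambda>c. \<psi> ((1 / r) *\<^sub>R (x - c)))"
      using test_fun_bump_scaled(1) r(1) by simp
    show ?thesis
    proof (rule Bochner_Integration.integrable_bound[OF test_fun_integrable[OF bump]])
      show "(\<lambda>c. indicator (box a b) c * \<psi> ((1 / r) *\<^sub>R (x - c))) \<in> borel_measurable lborel"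
        using test_fun_borel_measurable[OF bump] by simp
    qed (use bump_nonneg in \<open>auto simp: indicator_def\<close>)
  qed
  then show "AE x in lborel. integrable lborel (\<lambda>c. ?f (x, c))"
    by simp
qed

text \<open>Fubini: the mollified indicator is a superposition of translates of the bump, each of
  which is a test function orthogonal to \<open>v\<close>.\<close>
lemma integral_mult_mollify_box_eq_0:
  assumes v: "L2 v" and orth: "\<And>\<phi>. test_fun \<phi> \<Longrightarrow> (LINT x|lborel. v x * \<phi> x) = 0"
    and K: "supp \<psi> \<subseteq> cball 0 K" "0 \<le> K" and r: "0 < r" "r \<le> 1"
  shows "integrable lborel (\<lambda>x. v x * mollify_indicator (box a b) r x)"
    and "(LINT x|lborel. v x * mollify_indicator (box a b) r x) = 0"
proof -
  note kernel = integrable_bump_kernel[OF v K r, of a b]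
  show "integrable lborel (\<lambda>x. v x * mollify_indicator (box a b) r x)"
    using lborel_pair.integrable_fst[OF kernel] unfolding mollify_indicator_def by simp
  have "(\<lambda>x. v x * (indicator (box a b) c * \<psi> ((1 / r) *\<^sub>R (x - c))))
      = (\<lambda>x. indicator (box a b) c * (v x * \<psi> ((1 / r) *\<^sub>R (x - c))))" for c
    by (simp add: fun_eq_iff mult_ac)
  then have "(LINT x|lborel. v x * (indicator (box a b) c * \<psi> ((1 / r) *\<^sub>R (x - c))))
      = indicator (box a b) c * (LINT x|lborel. v x * \<psi> ((1 / r) *\<^sub>R (x - c)))" for c
    by simp
  then have inner: "(LINT x|lborel. v x * (indicator (box a b) c * \<psi> ((1 / r) *\<^sub>R (x - c)))) = 0" for c
    using orth[OF test_fun_bump_scaled(2)] r(1) by simp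
  have "(LINT x|lborel. v x * mollify_indicator (box a b) r x)
      = (LINT x|lborel. LINT c|lborel. v x * (indicator (box a b) c * \<psi> ((1 / r) *\<^sub>R (x - c))))"
    unfolding mollify_indicator_def by simp
  also have "\<dots> = (LINT c|lborel. LINT x|lborel. v x * (indicator (box a b) c * \<psi> ((1 / r) *\<^sub>R (x - c))))"
    by (rule lborel_pair.Fubini_integral[OF kernel, symmetric])
  finally show "(LINT x|lborel. v x * mollify_indicator (box a b) r x) = 0"
    using inner by simp
qed

lemma mollify_box_eq_away_from_boundary:
  assumes K: "supp \<psi> \<subseteq> cball 0 K" and r: "0 < r" "r * K < e"
    and e: "0 < e" "ball x e \<subseteq> box a b \<or> ball x e \<subseteq> - cbox a b"
  shows "mollify_indicator (box a b) r x = r ^ 3 * (LINT x|lborel. \<psi> x) * indicator (box a b) x"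
  using e(2)
proof
  assume inside: "ball x e \<subseteq> box a b"
  have "cball x (r * K) \<subseteq> ball x e" using r(2) by auto
  moreover have "x \<in> box a b" using inside e(1) by auto
  ultimately show ?thesis
    using mollify_indicator_eq[OF K r(1), of x "box a b"] inside by simp
next
  assume outside: "ball x e \<subseteq> - cbox a b"
  have "r * K < dist x c" if "c \<in> box a b" for c
    using outside that box_subset_cbox r(2) by (force simp: subset_iff)
  moreover have "x \<notin> box a b"
    using outside e(1) box_subset_cbox[of a b] centre_in_ball[of x e] by blast
  ultimately show ?thesis
    using mollify_indicator_eq_0[OF K r(1)] by simp
qed

lemma mollify_box_LIMSEQ:
  assumes K: "supp \<psi> \<subseteq> cball 0 K" and x: "x \<notin> cbox a b - box a b"
  shows "(\<lambda>n. mollify_indicator (box a b) (inverse (real (Suc n))) x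
           / (inverse (real (Suc n)) ^ 3 * (LINT x|lborel. \<psi> x))) \<longlonglongrightarrow> indicator (box a b) x"
proof -
  define r :: "nat \<Rightarrow> real" where "r n = inverse (real (Suc n))" for n
  have r: "0 < r n" for n unfolding r_def by simp
  obtain e where e: "0 < e" "ball x e \<subseteq> box a b \<or> ball x e \<subseteq> - cbox a b"
  proof (cases "x \<in> box a b")
    case True
    then show ?thesis using that open_box open_contains_ball by metis
  next
    case False
    then have "x \<in> - cbox a b" using x by simp
    then show ?thesis using that closed_cbox open_Compl open_contains_ball by metis
  qed
  have "(\<lambda>n. r n * \<bar>K\<bar>) \<longlonglongrightarrow> 0 * \<bar>K\<bar>"
    unfolding r_def by (intro tendsto_intros LIMSEQ_inverse_real_of_nat)
  then have "eventually (\<lambda>n. r n * \<bar>K\<bar> < e) sequentially"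
    using e(1) by (simp add: order_tendstoD(2))
  then have "eventually (\<lambda>n. mollify_indicator (box a b) (r n) x / (r n ^ 3 * (LINT x|lborel. \<psi> x))
      = indicator (box a b) x) sequentially"
  proof eventually_elim
    case (elim n)
    have "r n * K \<le> r n * \<bar>K\<bar>" using r[of n] by (simp add: mult_left_mono)
    then have "r n * K < e" using elim by linarith
    then show ?case
      using mollify_box_eq_away_from_boundary[OF K r[of n] _ e] r[of n] integral_bump_pos by simp
  qed
  then show ?thesis unfolding r_def by (rule tendsto_eventually)
qed

lemma integral_mult_indicator_box_eq_0:
  assumes v: "L2 v" and orth: "\<And>\<phi>. test_fun \<phi> \<Longrightarrow> (LINT x|lborel. v x * \<phi> x) = 0"
  shows "(LINT x|lborel. v x * indicator (box a b) x) = 0"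
proof -
  define I where "I = (LINT x|lborel. \<psi> x)"
  define r :: "nat \<Rightarrow> real" where "r n = inverse (real (Suc n))" for n
  have r: "0 < r n" "r n \<le> 1" for n unfolding r_def by (auto simp: inverse_le_1_iff)
  obtain K where K: "supp \<psi> \<subseteq> cball 0 K" "0 \<le> K"
  proof -
    obtain K where "\<forall>y\<in>supp \<psi>. norm y \<le> K"
      using compact_imp_bounded[OF compact_supp[OF test_fun_bump]] bounded_iff by metis
    then show ?thesis using that[of "max K 0"] by fastforce
  qed
  define KB where "KB = {y + z |y z. y \<in> cbox a b \<and> z \<in> cball (0::R3) K}"
  define s where "s n x = v x * mollify_indicator (box a b) (r n) x / (r n ^ 3 * I)" for n x
  have "emeasure lborel (cbox a b - box a b) = emeasure lborel (cbox a b) - emeasure lborel (box a b)"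
    by (rule emeasure_Diff) (use emeasure_lborel_box_finite[of a b] in \<open>auto simp: box_subset_cbox\<close>)
  also have "\<dots> = 0" by (simp add: emeasure_lborel_cbox_eq emeasure_lborel_box_eq)
  finally have null: "cbox a b - box a b \<in> null_sets lborel" by (auto intro: null_setsI)
  have "(\<lambda>n. LINT x|lborel. s n x) \<longlonglongrightarrow> (LINT x|lborel. v x * indicator (box a b) x)"
  proof (rule integral_dominated_convergence[where w="\<lambda>x. \<bar>v x\<bar> * indicator KB x"])
    show "(\<lambda>x. v x * indicator (box a b) x) \<in> borel_measurable lborel"
      using L2_borel_measurable[OF v] by simp
    show "s n \<in> borel_measurable lborel" for n
      unfolding s_def using integral_mult_mollify_box_eq_0(1)[OF v orth K r] by auto
    show "integrable lborel (\<lambda>x. \<bar>v x\<bar> * indicator KB x)"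
      unfolding KB_def by (intro integrable_abs_mult_indicator_compact[OF v] compact_sums compact_cbox compact_cball)
    show "AE x in lborel. (\<lambda>n. s n x) \<longlonglongrightarrow> v x * indicator (box a b) x"
    proof (rule AE_mp[OF AE_not_in[OF null]], intro AE_I2 impI)
      fix x assume "x \<notin> cbox a b - box a b"
      from tendsto_mult_left[OF mollify_box_LIMSEQ[OF K(1) this], of "v x"]
      show "(\<lambda>n. s n x) \<longlonglongrightarrow> v x * indicator (box a b) x"
        unfolding s_def r_def I_def by simp
    qed
    show "AE x in lborel. norm (s n x) \<le> \<bar>v x\<bar> * indicator KB x" for n
    proof (intro AE_I2)
      fix x
      have "mollify_indicator (box a b) (r n) x / (r n ^ 3 * I) \<le> indicator KB x"
        using mollify_box_le[OF K r(1)[of n] r(2)[of n], of a b x] integral_bump_pos r(1)[of n]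
        unfolding KB_def I_def by (simp add: divide_le_eq mult.commute)
      moreover have "norm (s n x) = \<bar>v x\<bar> * (mollify_indicator (box a b) (r n) x / (r n ^ 3 * I))"
        unfolding s_def I_def using mollify_indicator_nonneg integral_bump_pos r(1)[of n]
        by (simp add: abs_mult)
      ultimately show "norm (s n x) \<le> \<bar>v x\<bar> * indicator KB x"
        by (metis abs_ge_zero mult_left_mono)
    qed
  qed
  moreover have "(LINT x|lborel. s n x) = 0" for n
    unfolding s_def using integral_mult_mollify_box_eq_0(2)[OF v orth K r] by simp
  ultimately show ?thesis by (simp add: LIMSEQ_const_iff)
qed

theorem fundamental_lemma_calculus_of_variations:
  assumes "L2 v" and "\<And>\<phi>. test_fun \<phi> \<Longrightarrow> (LINT x|lborel. v x * \<phi> x) = 0"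
  shows "AE x in lborel. v x = 0"
  using L2_borel_measurable[OF assms(1)]
proof (rule AE_zero_if_box_integrals_zero)
  show "integrable lborel (\<lambda>x. v x * indicator (box a b) x)" for a b
    using L2_integrable_mult_indicator[OF assms(1) _ emeasure_lborel_box_finite] by simp
qed (rule integral_mult_indicator_box_eq_0[OF assms])

end

lemma bump_square_plateau:
  assumes chi: "test_fun chi" "0 < R" "\<And>x. norm x < R \<Longrightarrow> chi x = 1"
  shows "bump (\<lambda>x. chi x * chi x)"
proof
  define B :: "R3 set" where "B = box (- ((R/4) *\<^sub>R One)) ((R/4) *\<^sub>R One)"
  have "norm x < R" if "x \<in> B" for x
  proof -
    have "\<bar>x \<bullet> b\<bar> < R/4" if "b \<in> Basis" for b
      using \<open>x \<in> B\<close> that unfolding B_def mem_box by (auto simp: abs_less_iff)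
    then have "(\<Sum>b\<in>Basis. \<bar>x \<bullet> b\<bar>) < (\<Sum>b\<in>(Basis::R3 set). R/4)"
      by (intro sum_strict_mono) auto
    then show ?thesis using norm_le_l1[of x] chi(2) by simp
  qed
  then have le: "indicator B x \<le> chi x * chi x" for x
    using chi(3)[of x] by (auto simp: indicator_def)
  have "measure lborel B = (\<Prod>b\<in>(Basis::R3 set). ((R/4) *\<^sub>R One - (- ((R/4) *\<^sub>R One))) \<bullet> b)"
    unfolding B_def using chi(2) by (subst measure_lborel_box) (auto simp: inner_sum_Basis)
  also have "\<dots> = (\<Prod>b\<in>(Basis::R3 set). R/2)"
    by (rule prod.cong[OF refl]) (simp only: inner_diff_left inner_minus_left inner_scaleR_left inner_sum_Basis)
  finally have "0 < measure lborel B" using chi(2) by simp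
  also have "measure lborel B = (LINT x|lborel. indicator B x)"
    unfolding B_def using emeasure_lborel_box_finite by simp
  also have "\<dots> \<le> (LINT x|lborel. chi x * chi x)"
    using le test_fun_integrable[OF test_fun_square[OF chi(1)]] emeasure_lborel_box_finite
    unfolding B_def by (intro integral_mono integrable_real_indicator) auto
  finally show "0 < (LINT x|lborel. chi x * chi x)" .
qed (use test_fun_square[OF chi(1)] in auto)


section \<open>Weak derivatives and the space H2 x L2\<close>

lemma weak_deriv_add:
  assumes ds: "set ds \<subseteq> Basis" and u: "L2 u1" "L2 u2" and v: "L2 v1" "L2 v2"
    and w: "weak_deriv ds u1 v1" "weak_deriv ds u2 v2"
  shows "weak_deriv ds (\<lambda>x. u1 x + u2 x) (\<lambda>x. v1 x + v2 x)"
  unfolding weak_deriv_def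
proof (intro allI impI)
  fix \<phi> :: rfun assume \<phi>: "test_fun \<phi>"
  have t: "test_fun (iter_pd ds \<phi>)" using test_fun_iter_pd[OF \<phi> ds] .
  have "(LINT x|lborel. (u1 x + u2 x) * iter_pd ds \<phi> x) = (LINT x|lborel. u1 x * iter_pd ds \<phi> x + u2 x * iter_pd ds \<phi> x)"
    by (simp add: algebra_simps)
  also have "\<dots> = (LINT x|lborel. u1 x * iter_pd ds \<phi> x) + (LINT x|lborel. u2 x * iter_pd ds \<phi> x)"
    using L2_integrable_mult_test[OF u(1) t] L2_integrable_mult_test[OF u(2) t] by simp
  also have "\<dots> = (-1) ^ length ds * (LINT x|lborel. v1 x * \<phi> x) + (-1) ^ length ds * (LINT x|lborel. v2 x * \<phi> x)"
    using w \<phi> unfolding weak_deriv_def by simp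
  also have "\<dots> = (-1) ^ length ds * ((LINT x|lborel. v1 x * \<phi> x + v2 x * \<phi> x))"
    using L2_integrable_mult_test[OF v(1) \<phi>] L2_integrable_mult_test[OF v(2) \<phi>] by (simp add: algebra_simps)
  finally show "(LINT x|lborel. (u1 x + u2 x) * iter_pd ds \<phi> x) = (-1) ^ length ds * (LINT x|lborel. (v1 x + v2 x) * \<phi> x)"
    by (simp add: algebra_simps)
qed

lemma weak_deriv_cmult:
  assumes "weak_deriv ds u v"
  shows "weak_deriv ds (\<lambda>x. c * u x) (\<lambda>x. c * v x)"
  using assms unfolding weak_deriv_def by (simp add: mult.assoc)

lemma weak_deriv_nil: "weak_deriv [] u u"
  unfolding weak_deriv_def by simp

lemma H2_L2: "H2 u \<Longrightarrow> L2 u"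
  unfolding H2_def by blast

lemma wd_spec:
  assumes "H2 u" "set ds \<subseteq> Basis" "length ds \<le> 2"
  shows "L2 (wd ds u)" "weak_deriv ds u (wd ds u)"
proof -
  have "\<exists>v. L2 v \<and> weak_deriv ds u v" using assms unfolding H2_def by blast
  from someI_ex[OF this] show "L2 (wd ds u)" "weak_deriv ds u (wd ds u)" unfolding wd_def by blast+
qed

lemma H2_add:
  assumes "H2 u" "H2 w"
  shows "H2 (\<lambda>x. u x + w x)"
  unfolding H2_def
proof (intro conjI allI impI)
  show "L2 (\<lambda>x. u x + w x)" using assms H2_L2 L2_add by blast
  fix ds :: "R3 list" assume ds: "set ds \<subseteq> Basis \<and> length ds \<le> 2"
  show "\<exists>v. L2 v \<and> weak_deriv ds (\<lambda>x. u x + w x) v"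
    using weak_deriv_add[OF _ H2_L2[OF assms(1)] H2_L2[OF assms(2)] wd_spec(1)[OF assms(1)] wd_spec(1)[OF assms(2)]
        wd_spec(2)[OF assms(1)] wd_spec(2)[OF assms(2)]] ds
      L2_add[OF wd_spec(1)[OF assms(1)] wd_spec(1)[OF assms(2)]] by blast
qed

lemma H2_cmult:
  assumes "H2 u"
  shows "H2 (\<lambda>x. c * u x)"
  unfolding H2_def
proof (intro conjI allI impI)
  show "L2 (\<lambda>x. c * u x)" using assms H2_L2 L2_cmult by blast
  fix ds :: "R3 list" assume ds: "set ds \<subseteq> Basis \<and> length ds \<le> 2"
  show "\<exists>v. L2 v \<and> weak_deriv ds (\<lambda>x. c * u x) v"
    using weak_deriv_cmult[OF wd_spec(2)[OF assms]] L2_cmult[OF wd_spec(1)[OF assms]] ds by blast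
qed

lemma wlap_L2: "H2 u \<Longrightarrow> L2 (wlap u)"
proof -
  assume u: "H2 u"
  have "L2 (\<lambda>x. \<Sum>b\<in>Basis. wd [b, b] u x)"
    by (rule L2_sum) (auto intro: wd_spec(1)[OF u])
  then show ?thesis unfolding wlap_def[abs_def] .
qed

definition H2_indices :: "R3 list set" where
  "H2_indices = {ds. set ds \<subseteq> Basis \<and> length ds \<le> 2}"

lemma finite_H2_indices: "finite H2_indices"
  unfolding H2_indices_def by (rule finite_lists_length_le) simp

lemma H2norm_eq_sum: "H2norm u = sqrt (\<Sum>ds\<in>H2_indices. (L2norm (wd ds u))^2)"
  unfolding H2norm_def H2_indices_def ..

lemma H2norm_nonneg: "H2norm u \<ge> 0"
  unfolding H2norm_eq_sum by (simp add: sum_nonneg)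

lemma inS_add: "inS h \<Longrightarrow> inS k \<Longrightarrow> inS (padd h k)"
  unfolding inS_def padd_def using H2_add L2_add by auto

lemma inS_scale: "inS h \<Longrightarrow> inS (pscale c h)"
  unfolding inS_def pscale_def using H2_cmult L2_cmult by auto

lemma pnorm_nonneg: "pnorm h \<ge> 0"
  unfolding pnorm_def using H2norm_nonneg L2norm_nonneg by (simp add: add_nonneg_nonneg)

context bump
begin

lemma weak_deriv_unique_AE:
  assumes ds: "set ds \<subseteq> Basis"
    and v: "L2 v" "weak_deriv ds u v" and w: "L2 w" "weak_deriv ds u w"
  shows "AE x in lborel. v x = w x"
proof -
  have "AE x in lborel. v x - w x = 0"
  proof (rule fundamental_lemma_calculus_of_variations[OF L2_diff[OF v(1) w(1)]])
    fix \<phi> :: rfun assume \<phi>: "test_fun \<phi>"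
    have "(-1) ^ length ds * (LINT x|lborel. v x * \<phi> x) = (-1) ^ length ds * (LINT x|lborel. w x * \<phi> x)"
      using v(2) w(2) \<phi> unfolding weak_deriv_def by metis
    then have e: "(LINT x|lborel. v x * \<phi> x) = (LINT x|lborel. w x * \<phi> x)" by simp
    have "(LINT x|lborel. (v x - w x) * \<phi> x) = (LINT x|lborel. v x * \<phi> x - w x * \<phi> x)"
      by (simp add: algebra_simps)
    also have "\<dots> = (LINT x|lborel. v x * \<phi> x) - (LINT x|lborel. w x * \<phi> x)"
      using L2_integrable_mult_test[OF v(1) \<phi>] L2_integrable_mult_test[OF w(1) \<phi>] by simp
    finally show "(LINT x|lborel. (v x - w x) * \<phi> x) = 0" using e by simp
  qed
  then show ?thesis by simp
qed

lemma wd_add_AE: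
  assumes u: "H2 u" "H2 w" and ds: "set ds \<subseteq> Basis" "length ds \<le> 2"
  shows "AE x in lborel. wd ds (\<lambda>x. u x + w x) x = wd ds u x + wd ds w x"
proof (rule weak_deriv_unique_AE[OF ds(1)])
  have H: "H2 (\<lambda>x. u x + w x)" using H2_add u by blast
  show "L2 (wd ds (\<lambda>x. u x + w x))" "weak_deriv ds (\<lambda>x. u x + w x) (wd ds (\<lambda>x. u x + w x))"
    using wd_spec[OF H ds] by auto
  show "L2 (\<lambda>x. wd ds u x + wd ds w x)" using L2_add wd_spec(1)[OF u(1) ds] wd_spec(1)[OF u(2) ds] by blast
  show "weak_deriv ds (\<lambda>x. u x + w x) (\<lambda>x. wd ds u x + wd ds w x)"
    using weak_deriv_add[OF ds(1) H2_L2[OF u(1)] H2_L2[OF u(2)] wd_spec(1)[OF u(1) ds] wd_spec(1)[OF u(2) ds]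
        wd_spec(2)[OF u(1) ds] wd_spec(2)[OF u(2) ds]] .
qed

lemma wd_cmult_AE:
  assumes u: "H2 u" and ds: "set ds \<subseteq> Basis" "length ds \<le> 2"
  shows "AE x in lborel. wd ds (\<lambda>x. c * u x) x = c * wd ds u x"
proof (rule weak_deriv_unique_AE[OF ds(1)])
  have H: "H2 (\<lambda>x. c * u x)" using H2_cmult u by blast
  show "L2 (wd ds (\<lambda>x. c * u x))" "weak_deriv ds (\<lambda>x. c * u x) (wd ds (\<lambda>x. c * u x))"
    using wd_spec[OF H ds] by auto
  show "L2 (\<lambda>x. c * wd ds u x)" using L2_cmult wd_spec(1)[OF u ds] by blast
  show "weak_deriv ds (\<lambda>x. c * u x) (\<lambda>x. c * wd ds u x)"
    using weak_deriv_cmult[OF wd_spec(2)[OF u ds]] .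
qed

lemma wd_nil_AE:
  assumes u: "H2 u"
  shows "AE x in lborel. wd [] u x = u x"
  using weak_deriv_unique_AE[OF _ wd_spec(1)[OF u] wd_spec(2)[OF u] H2_L2[OF u] weak_deriv_nil] by simp

lemma wd_test_fun_AE:
  assumes \<phi>: "test_fun \<phi>" and ds: "set ds \<subseteq> Basis" "length ds \<le> 2"
  shows "AE x in lborel. wd ds \<phi> x = iter_pd (rev ds) \<phi> x"
  using weak_deriv_unique_AE[OF ds(1) wd_spec(1)[OF test_fun_H2[OF \<phi>] ds] wd_spec(2)[OF test_fun_H2[OF \<phi>] ds]
     test_fun_L2[OF test_fun_iter_pd[OF \<phi>]] test_fun_weak_deriv[OF \<phi> ds(1)]] ds by simp

lemma wlap_add_AE:
  assumes u: "H2 u" "H2 w"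
  shows "AE x in lborel. wlap (\<lambda>x. u x + w x) x = wlap u x + wlap w x"
proof -
  have "AE x in lborel. \<forall>b\<in>Basis. wd [b, b] (\<lambda>x. u x + w x) x = wd [b, b] u x + wd [b, b] w x"
    by (rule AE_finite_allI) (auto intro: wd_add_AE[OF u])
  then show ?thesis
    by (rule AE_mp) (auto intro!: AE_I2 simp: wlap_def sum.distrib[symmetric] intro: sum.cong)
qed

lemma wlap_cmult_AE:
  assumes u: "H2 u"
  shows "AE x in lborel. wlap (\<lambda>x. c * u x) x = c * wlap u x"
proof -
  have "AE x in lborel. \<forall>b\<in>Basis. wd [b, b] (\<lambda>x. c * u x) x = c * wd [b, b] u x"
    by (rule AE_finite_allI) (auto intro: wd_cmult_AE[OF u])
  then show ?thesis
    by (rule AE_mp) (auto intro!: AE_I2 simp: wlap_def sum_distrib_left intro: sum.cong)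
qed

lemma wlap_test_fun_AE:
  assumes \<phi>: "test_fun \<phi>"
  shows "AE x in lborel. wlap \<phi> x = lap \<phi> x"
proof -
  have "AE x in lborel. \<forall>b\<in>Basis. wd [b, b] \<phi> x = pd b (pd b \<phi>) x"
  proof (rule AE_finite_allI)
    fix b :: R3 assume "b \<in> Basis"
    then show "AE x in lborel. wd [b, b] \<phi> x = pd b (pd b \<phi>) x"
      using wd_test_fun_AE[OF \<phi>, of "[b, b]"] by simp
  qed simp
  then show ?thesis
    by (rule AE_mp) (auto intro!: AE_I2 simp: wlap_def lap_def intro: sum.cong)
qed

lemma H2norm_scale:
  assumes u: "H2 u"
  shows "H2norm (\<lambda>x. t * u x) = \<bar>t\<bar> * H2norm u"
proof -
  have "L2norm (wd ds (\<lambda>x. t * u x)) = \<bar>t\<bar> * L2norm (wd ds u)" if ds: "ds \<in> H2_indices" for ds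
  proof -
    have d: "set ds \<subseteq> Basis" "length ds \<le> 2" using ds unfolding H2_indices_def by auto
    have "L2norm (wd ds (\<lambda>x. t * u x)) = L2norm (\<lambda>x. t * wd ds u x)"
      using wd_cmult_AE[OF u d] L2_borel_measurable[OF wd_spec(1)[OF H2_cmult[OF u] d]] L2_borel_measurable[OF wd_spec(1)[OF u d]]
      by (intro L2norm_cong_AE) auto
    then show ?thesis by (simp add: L2norm_scale)
  qed
  then have "(\<Sum>ds\<in>H2_indices. (L2norm (wd ds (\<lambda>x. t * u x)))^2) = t^2 * (\<Sum>ds\<in>H2_indices. (L2norm (wd ds u))^2)"
    by (simp add: sum_distrib_left power_mult_distrib)
  then show ?thesis unfolding H2norm_eq_sum by (simp add: real_sqrt_mult)
qed

lemma L2norm_le_H2norm: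
  assumes u: "H2 u"
  shows "L2norm u \<le> H2norm u"
proof -
  have "L2norm (wd [] u) = L2norm u"
    using wd_nil_AE[OF u] L2_borel_measurable[OF wd_spec(1)[OF u]] L2_borel_measurable[OF H2_L2[OF u]]
    by (intro L2norm_cong_AE) auto
  moreover have "[] \<in> H2_indices" unfolding H2_indices_def by simp
  ultimately have "(L2norm u)^2 \<le> (\<Sum>ds\<in>H2_indices. (L2norm (wd ds u))^2)"
    using member_le_sum[of "[]" H2_indices "\<lambda>ds. (L2norm (wd ds u))^2"] finite_H2_indices by simp
  then have "sqrt ((L2norm u)^2) \<le> H2norm u" unfolding H2norm_eq_sum using real_sqrt_le_mono by blast
  then show ?thesis using L2norm_nonneg by simp
qed

lemma pnorm_scale:
  assumes h: "inS h"
  shows "pnorm (pscale t h) = \<bar>t\<bar> * pnorm h"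
  using h H2norm_scale unfolding pnorm_def pscale_def inS_def
  by (simp add: L2norm_scale algebra_simps)

end


section \<open>Fr\'echet derivatives along rays\<close>

lemma eq_0_if_abs_le_eps_mult:
  fixes d C :: real
  assumes "\<And>e. 0 < e \<Longrightarrow> \<bar>d\<bar> \<le> e * C" "0 \<le> C"
  shows "d = 0"
proof -
  have "\<bar>d\<bar> \<le> 0 + e" if "0 < e" for e
  proof -
    have "\<bar>d\<bar> \<le> e / (C + 1) * C" using that assms(2) by (intro assms(1)) simp
    also have "\<dots> \<le> e" using that assms(2) by (simp add: field_simps)
    finally show ?thesis by simp
  qed
  then have "\<bar>d\<bar> \<le> 0" by (rule field_le_epsilon)
  then show ?thesis by simp
qed

lemma frechet_real_zeroI:
  assumes "\<And>h. inS h \<Longrightarrow> \<bar>F (padd y h) - F y\<bar> \<le> pnorm h ^ 2"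
  shows "frechet_real F y (\<lambda>h. 0)"
proof -
  have "\<exists>d>0. \<forall>h. inS h \<longrightarrow> pnorm h < d \<longrightarrow> \<bar>F (padd y h) - F y - 0\<bar> \<le> e * pnorm h"
    if e: "0 < e" for e
  proof -
    have "\<bar>F (padd y h) - F y - 0\<bar> \<le> e * pnorm h" if "inS h" "pnorm h < e" for h
    proof -
      have "pnorm h ^ 2 \<le> e * pnorm h"
        using that(2) pnorm_nonneg[of h] by (simp add: power2_eq_square mult_right_mono)
      then show ?thesis using assms[OF that(1)] by simp
    qed
    then show ?thesis using e by blast
  qed
  then show ?thesis unfolding frechet_real_def by (auto intro: exI[of _ 0])
qed

context bump
begin

lemma frechet_real_apply_eqI:
  assumes F: "frechet_real F y L" and h: "inS h"
    and eq: "\<And>t. F (padd y (pscale t h)) - F y = t * A + t^2 * B"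
  shows "L h = A"
proof -
  have lin: "L (pscale c h) = c * L h" for c using F h unfolding frechet_real_def by blast
  have fr: "\<forall>e>0. \<exists>d>0. \<forall>h. inS h \<longrightarrow> pnorm h < d \<longrightarrow> \<bar>F (padd y h) - F y - L h\<bar> \<le> e * pnorm h"
    using F unfolding frechet_real_def by blast
  define P where "P = pnorm h"
  have P: "P \<ge> 0" unfolding P_def by (rule pnorm_nonneg)
  have "\<bar>A - L h\<bar> \<le> e * (P + 1)" if e: "e > 0" for e
  proof -
    obtain d where d: "d > 0" "\<And>h. inS h \<Longrightarrow> pnorm h < d \<Longrightarrow> \<bar>F (padd y h) - F y - L h\<bar> \<le> e * pnorm h"
      using fr e by blast
    define t where "t = min (d / (2 * (P + 1))) (e / (\<bar>B\<bar> + 1))"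
    have t: "t > 0" unfolding t_def using d e P by simp
    have "t * P \<le> d / (2 * (P + 1)) * P" unfolding t_def using P by (intro mult_right_mono) auto
    also have "\<dots> < d" using d(1) P by (simp add: field_simps add_nonneg_pos)
    finally have tP: "t * P < d" .
    have pn: "pnorm (pscale t h) = t * P" using pnorm_scale[OF h] t unfolding P_def by simp
    have "\<bar>F (padd y (pscale t h)) - F y - L (pscale t h)\<bar> \<le> e * pnorm (pscale t h)"
      by (rule d(2)[OF inS_scale[OF h]]) (simp add: pn tP)
    then have "\<bar>F (padd y (pscale t h)) - F y - L (pscale t h)\<bar> \<le> e * (t * P)" by (simp add: pn)
    then have "\<bar>t * A + t^2 * B - t * L h\<bar> \<le> e * (t * P)" using eq lin by simp
    moreover have "t * A + t^2 * B - t * L h = t * (A + t * B - L h)" by (simp add: power2_eq_square algebra_simps)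
    ultimately have "t * \<bar>A + t * B - L h\<bar> \<le> t * (e * P)" using t by (simp add: abs_mult)
    then have 1: "\<bar>A + t * B - L h\<bar> \<le> e * P" using t by simp
    have "t * \<bar>B\<bar> \<le> e / (\<bar>B\<bar> + 1) * \<bar>B\<bar>" unfolding t_def by (intro mult_right_mono) auto
    also have "\<dots> \<le> e" using e by (simp add: field_simps)
    finally have 2: "t * \<bar>B\<bar> \<le> e" .
    have "\<bar>A - L h\<bar> \<le> \<bar>A + t * B - L h\<bar> + \<bar>t * B\<bar>" by linarith
    also have "\<dots> \<le> e * P + e" using 1 2 t by (simp add: abs_mult)
    finally show ?thesis by (simp add: algebra_simps)
  qed
  then have "A - L h = 0" using P by (intro eq_0_if_abs_le_eps_mult[of _ "P + 1"]) auto
  then show ?thesis by simp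
qed

lemma frechet_L2_apply_AE_eqI:
  assumes F: "frechet_L2 F y L" and h: "inS h" and E: "L2 E"
    and Fm: "\<And>t. (\<lambda>x. F (padd y (pscale t h)) x - F y x) \<in> borel_measurable lborel"
    and eq: "\<And>t. AE x in lborel. F (padd y (pscale t h)) x - F y x = t * E x"
  shows "AE x in lborel. L h x = E x"
proof -
  have L2L: "\<And>h. inS h \<Longrightarrow> L2 (L h)" using F unfolding frechet_L2_def by blast
  have lin: "AE x in lborel. L (pscale c h) x = c * L h x" for c using F h unfolding frechet_L2_def by blast
  have fr: "\<forall>e>0. \<exists>d>0. \<forall>h. inS h \<longrightarrow> pnorm h < d \<longrightarrow> L2norm (\<lambda>x. F (padd y h) x - F y x - L h x) \<le> e * pnorm h"
    using F unfolding frechet_L2_def by blast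
  define W where "W x = E x - L h x" for x
  have W: "L2 W" unfolding W_def using L2_diff[OF E L2L[OF h]] .
  define P where "P = pnorm h"
  have P: "P \<ge> 0" unfolding P_def by (rule pnorm_nonneg)
  have "\<bar>L2norm W\<bar> \<le> e * (P + 1)" if e: "e > 0" for e
  proof -
    obtain d where d: "d > 0" "\<And>h. inS h \<Longrightarrow> pnorm h < d \<Longrightarrow> L2norm (\<lambda>x. F (padd y h) x - F y x - L h x) \<le> e * pnorm h"
      using fr e by blast
    define t where "t = d / (2 * (P + 1))"
    have t: "t > 0" unfolding t_def using d P by simp
    have "t * P < d" unfolding t_def using d(1) P by (simp add: field_simps add_nonneg_pos)
    moreover have pn: "pnorm (pscale t h) = t * P" using pnorm_scale[OF h] t unfolding P_def by simp
    ultimately have "L2norm (\<lambda>x. F (padd y (pscale t h)) x - F y x - L (pscale t h) x) \<le> e * pnorm (pscale t h)"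
      by (intro d(2)[OF inS_scale[OF h]]) simp
    then have 1: "L2norm (\<lambda>x. F (padd y (pscale t h)) x - F y x - L (pscale t h) x) \<le> e * (t * P)" by (simp add: pn)
    have "L2norm (\<lambda>x. F (padd y (pscale t h)) x - F y x - L (pscale t h) x) = L2norm (\<lambda>x. t * W x)"
    proof (rule L2norm_cong_AE)
      show "(\<lambda>x. F (padd y (pscale t h)) x - F y x - L (pscale t h) x) \<in> borel_measurable lborel"
        using Fm[of t] L2_borel_measurable[OF L2L[OF inS_scale[OF h]]] by auto
      show "(\<lambda>x. t * W x) \<in> borel_measurable lborel" using L2_borel_measurable[OF W] by auto
      show "AE x in lborel. F (padd y (pscale t h)) x - F y x - L (pscale t h) x = t * W x"
        using eq[of t] lin[of t] by eventually_elim (simp add: W_def algebra_simps)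
    qed
    then have "t * L2norm W \<le> t * (e * P)" using 1 t by (simp add: L2norm_scale)
    then have "L2norm W \<le> e * P" using t by simp
    then show ?thesis using L2norm_nonneg[of W] e by (simp add: algebra_simps)
  qed
  then have "L2norm W = 0" using P by (intro eq_0_if_abs_le_eps_mult[of _ "P + 1"]) auto
  then have "AE x in lborel. W x = 0" using L2norm_eq_0_AE[OF W] by simp
  then show ?thesis unfolding W_def by auto
qed

lemma abs_ip_le_pnorm:
  assumes "inS h"
  shows "\<bar>ip (fst h) (snd h)\<bar> \<le> pnorm h ^ 2 / 2"
proof -
  obtain h1 h2 where hh: "h = (h1, h2)" by (cases h)
  have h1: "H2 h1" and h2: "L2 h2" using assms unfolding inS_def hh by auto
  have "L2norm h1 ^ 2 \<le> H2norm h1 ^ 2"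
    using L2norm_le_H2norm[OF h1] L2norm_nonneg by (simp add: power_mono)
  then have "\<bar>ip h1 h2\<bar> \<le> (H2norm h1 ^ 2 + L2norm h2 ^ 2) / 2"
    using ip_bound[OF H2_L2[OF h1] h2] by simp
  also have "\<dots> \<le> (H2norm h1 + L2norm h2) ^ 2 / 2"
    using H2norm_nonneg[of h1] L2norm_nonneg[of h2] by (simp add: power2_sum)
  finally show ?thesis unfolding pnorm_def hh by simp
qed

end


section \<open>The Laplacian of the far field\<close>

lemma lap_borel_measurable:
  assumes "\<And>b x. b \<in> Basis \<Longrightarrow> pd b f differentiable (at x)"
  shows "lap f \<in> borel_measurable lborel"
proof -
  have "(\<lambda>x. \<Sum>b\<in>Basis. pd b (pd b f) x) \<in> borel_measurable lborel"
    using assms by (intro borel_measurable_sum pd_borel_measurable)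
  then show ?thesis unfolding lap_def[abs_def] .
qed

lemma lap_test_fun_borel_measurable: "test_fun \<phi> \<Longrightarrow> lap \<phi> \<in> borel_measurable lborel"
  using smooth_iter_pd_differentiable[of \<phi> "[b]" for b]
  by (intro lap_borel_measurable) (auto simp: test_fun_def)

lemma differentiable_transform_open:
  assumes "f differentiable (at x)" "open U" "x \<in> U" "\<And>z. z \<in> U \<Longrightarrow> f z = g z"
  shows "g differentiable (at x)"
  using assms has_derivative_transform_within_open[of f _ x UNIV U g] unfolding differentiable_def by blast

lemma has_derivative_inverse_norm:
  fixes z :: "'a::real_inner"
  assumes "z \<noteq> 0"
  shows "((\<lambda>z. - (k / norm z)) has_derivative (\<lambda>h. h \<bullet> sgn z * (k / (norm z)^2))) (at z)"
proof -
  have "((\<lambda>t. - (k / t)) has_real_derivative k / (norm z)^2) (at (norm z))"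
    using assms by (auto intro!: derivative_eq_intros simp: power2_eq_square field_simps)
  from DERIV_compose_FDERIV[OF this has_derivative_norm[OF assms]] show ?thesis .
qed

lemma pd_inverse_norm:
  assumes "z \<noteq> 0"
  shows "pd b (\<lambda>z. - (k / norm z)) z = (z \<bullet> b) / norm z * (k / (norm z)^2)"
  using pd_eqI[OF has_derivative_inverse_norm[OF assms]] assms
  by (simp add: sgn_div_norm inner_commute field_simps)

text \<open>The far field vanishes near the origin, and away from it it is a product of smooth
  functions, so its first partial derivatives are differentiable everywhere.\<close>
lemma pd_far_field_differentiable:
  assumes chi: "smooth chi" "0 < R" "\<And>x. norm x < R \<Longrightarrow> chi x = 1"
    and m: "\<And>x. m x = - (k / norm x) * (1 - chi x)" and b: "b \<in> Basis"
  shows "pd b m differentiable (at x)"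
proof (cases "norm x < R")
  case True
  have "pd b m z = pd b (\<lambda>_. 0) z" if "z \<in> ball 0 R" for z
    by (rule pd_cong_open[OF open_ball that]) (simp add: m chi(3))
  then show ?thesis
    using differentiable_transform_open[of "\<lambda>_. 0" x "ball 0 R" "pd b m"] True by (simp add: pd_const)
next
  case False
  then have x0: "x \<noteq> 0" using chi(2) by auto
  define u where "u z = - (k / norm z)" for z :: R3
  define P where "P z = (z \<bullet> b) / norm z * (k / (norm z)^2)" for z :: R3
  have ud: "u differentiable (at z)" if "z \<noteq> 0" for z
    using has_derivative_inverse_norm[OF that] unfolding u_def differentiable_def by blast
  have chid: "chi differentiable (at z)" for z
    using smooth_imp_differentiable[OF chi(1)] .
  have omc: "(\<lambda>z. 1 - chi z) differentiable (at z)" for z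
    by (intro differentiable_diff differentiable_const chid)
  have pdomc: "pd b (\<lambda>z. 1 - chi z) z = - pd b chi z" for z
  proof -
    have "pd b (\<lambda>z. 1 + (-1) * chi z) z = pd b (\<lambda>_. 1) z + pd b (\<lambda>z. (-1) * chi z) z"
      by (intro pd_add differentiable_const differentiable_mult chid)
    then show ?thesis using pd_cmult[OF chid, of b "-1" z] pd_const[of b 1 z] by simp
  qed
  have eq: "pd b m z = P z * (1 - chi z) + u z * (- pd b chi z)" if "z \<in> - {0}" for z
  proof -
    have "m = (\<lambda>z. u z * (1 - chi z))" unfolding u_def by (simp add: m fun_eq_iff)
    then have "pd b m z = pd b u z * (1 - chi z) + u z * pd b (\<lambda>z. 1 - chi z) z"
      using pd_mult[OF ud omc] that by simp
    then show ?thesis using pd_inverse_norm[of z b k] pdomc[of z] that unfolding u_def P_def by simp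
  qed
  have "P differentiable (at x)"
    unfolding P_def using x0
    by (intro differentiable_mult differentiable_divide differentiable_const differentiable_norm_at
        differentiable_power bounded_linear_imp_differentiable bounded_linear_inner_left) auto
  then have "(\<lambda>z. P z * (1 - chi z) + u z * (- pd b chi z)) differentiable (at x)"
    using smooth_iter_pd_differentiable[OF chi(1), of "[b]"] b
    by (intro differentiable_add differentiable_mult differentiable_minus ud[OF x0] omc) auto
  then show ?thesis
    by (rule differentiable_transform_open[OF _ open_Compl[OF closed_singleton]]) (use x0 eq in auto)
qed

lemma lap_far_field_borel_measurable:
  assumes "smooth chi" "0 < R" "\<And>x. norm x < R \<Longrightarrow> chi x = 1"
    and "\<And>x. m x = - (k / norm x) * (1 - chi x)"
  shows "lap m \<in> borel_measurable lborel"
  using pd_far_field_differentiable[OF assms] by (rule lap_borel_measurable)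


section \<open>The Lagrange multiplier\<close>

definition energy :: "rfun \<Rightarrow> pair \<Rightarrow> real" where
  "energy a y = ip (\<lambda>x. a x - fst y x / 2) (snd y)"

definition poisson_residual :: "real \<Rightarrow> rfun \<Rightarrow> pair \<Rightarrow> rfun" where
  "poisson_residual G m y = (\<lambda>x. wlap (fst y) x + lap m x - 4 * pi * G * snd y x)"

lemma energy_increment:
  assumes "L2 a" "inS y" "inS h"
  shows "energy a (padd y h) - energy a y
       = ip (\<lambda>x. a x - fst y x / 2) (snd h) - ip (fst h) (snd y) / 2 - ip (fst h) (snd h) / 2"
proof -
  obtain \<Phi> \<rho> h1 h2 where yh: "y = (\<Phi>, \<rho>)" "h = (h1, h2)" by (cases y, cases h)
  have L2: "L2 (\<lambda>x. a x - \<Phi> x / 2)" "L2 \<rho>" "L2 h1" "L2 h2"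
    using assms L2_diff L2_cmult[of \<Phi> "1/2"] H2_L2 unfolding inS_def yh by auto
  have "(\<lambda>x. a x - (\<Phi> x + h1 x) / 2) = (\<lambda>x. (a x - \<Phi> x / 2) - h1 x / 2)"
    by (simp add: fun_eq_iff field_simps)
  then show ?thesis
    using ip_expand[OF L2] unfolding energy_def padd_def yh by simp
qed

lemma poisson_residual_borel_measurable:
  "lap m \<in> borel_measurable lborel \<Longrightarrow> inS y \<Longrightarrow> poisson_residual G m y \<in> borel_measurable lborel"
  unfolding poisson_residual_def inS_def using L2_borel_measurable wlap_L2 by auto

lemma ip_poisson_residual_eq_0:
  assumes "lap m \<in> borel_measurable lborel" "inS y"
    and "AE x in lborel. poisson_residual G m y x = 0" "L2 lam"
  shows "ip lam (poisson_residual G m y) = 0"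
  using ip_cong_AE[of lam "poisson_residual G m y" "\<lambda>_. 0"] assms
    L2_borel_measurable poisson_residual_borel_measurable
  by (simp add: ip_zero_right)

context bump
begin

lemma frechet_energy:
  assumes "L2 a" "inS y" "frechet_real (energy a) y L" "inS h"
  shows "L h = ip (\<lambda>x. a x - fst y x / 2) (snd h) - ip (fst h) (snd y) / 2"
proof (rule frechet_real_apply_eqI[OF assms(3,4)])
  fix t
  have "energy a (padd y (pscale t h)) - energy a y
      = t * (ip (\<lambda>x. a x - fst y x / 2) (snd h) - ip (fst h) (snd y) / 2) + t\<^sup>2 * (- ip (fst h) (snd h) / 2)"
    using energy_increment[OF assms(1,2) inS_scale[OF assms(4)]]
    by (simp add: pscale_def ip_scale_left ip_scale_right power2_eq_square algebra_simps)
  then show "energy a (padd y (pscale t h)) - energy a y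
      = t * (ip (\<lambda>x. a x - fst y x / 2) (snd h) - ip (fst h) (snd y) / 2) + t\<^sup>2 * (- ip (fst h) (snd h) / 2)" .
qed

lemma poisson_residual_increment_AE:
  assumes "inS y" "inS h"
  shows "AE x in lborel. poisson_residual G m (padd y h) x
    = poisson_residual G m y x + (wlap (fst h) x - 4 * pi * G * snd h x)"
proof -
  have "AE x in lborel. wlap (\<lambda>x. fst y x + fst h x) x = wlap (fst y) x + wlap (fst h) x"
    using wlap_add_AE assms unfolding inS_def by blast
  then show ?thesis
    by eventually_elim (simp add: padd_def poisson_residual_def algebra_simps)
qed

lemma frechet_poisson_residual:
  assumes m: "lap m \<in> borel_measurable lborel" and y: "inS y"
    and L: "frechet_L2 (poisson_residual G m) y L" and h: "inS h"
  shows "AE x in lborel. L h x = wlap (fst h) x - 4 * pi * G * snd h x"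
proof (rule frechet_L2_apply_AE_eqI[OF L h])
  have h12: "H2 (fst h)" "L2 (snd h)" using h unfolding inS_def by auto
  show "L2 (\<lambda>x. wlap (fst h) x - 4 * pi * G * snd h x)"
    using L2_diff[OF wlap_L2 L2_cmult] h12 by blast
  fix t
  have yt: "inS (padd y (pscale t h))" using inS_add[OF y inS_scale[OF h]] .
  show "(\<lambda>x. poisson_residual G m (padd y (pscale t h)) x - poisson_residual G m y x) \<in> borel_measurable lborel"
    using poisson_residual_borel_measurable[OF m yt] poisson_residual_borel_measurable[OF m y] by auto
  show "AE x in lborel. poisson_residual G m (padd y (pscale t h)) x - poisson_residual G m y x
      = t * (wlap (fst h) x - 4 * pi * G * snd h x)"
    using poisson_residual_increment_AE[OF y inS_scale[OF h, of t], of G m] wlap_cmult_AE[OF h12(1), of t]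
    by eventually_elim (simp add: pscale_def algebra_simps)
qed

lemma ip_poisson_residual:
  assumes m: "lap m \<in> borel_measurable lborel" and y: "inS y"
    and g0: "AE x in lborel. poisson_residual G m y x = 0" and lam: "L2 lam" and h: "inS h"
  shows "ip lam (poisson_residual G m (padd y h)) = ip lam (wlap (fst h)) - 4 * pi * G * ip lam (snd h)"
proof -
  have h12: "H2 (fst h)" "L2 (snd h)" using h unfolding inS_def by auto
  have "AE x in lborel. poisson_residual G m (padd y h) x = wlap (fst h) x - 4 * pi * G * snd h x"
    using poisson_residual_increment_AE[OF y h, of G m] g0 by eventually_elim simp
  then have "ip lam (poisson_residual G m (padd y h)) = ip lam (\<lambda>x. wlap (fst h) x - 4 * pi * G * snd h x)"
    using L2_borel_measurable[OF lam] L2_borel_measurable[OF wlap_L2[OF h12(1)]] L2_borel_measurable[OF h12(2)]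
      poisson_residual_borel_measurable[OF m inS_add[OF y h]]
    by (intro ip_cong_AE) auto
  also have "\<dots> = ip lam (wlap (fst h)) - 4 * pi * G * ip lam (snd h)"
    using ip_diff_right[OF lam wlap_L2[OF h12(1)] L2_cmult[OF h12(2)]] by (simp add: ip_scale_right)
  finally show ?thesis .
qed

lemma constrained_stationary_identity:
  assumes G: "0 < G" and a: "L2 a" and m: "lap m \<in> borel_measurable lborel"
    and st: "stationary_constr (energy a) (poisson_residual G m) y" and u: "H2 u"
  shows "ip (\<lambda>x. a x - fst y x / 2) (wlap u) = 2 * pi * G * ip u (snd y)"
proof -
  obtain LF Lg where y: "inS y" and LF: "frechet_real (energy a) y LF"
    and Lg: "frechet_L2 (poisson_residual G m) y Lg"
    and ker: "\<And>h. inS h \<Longrightarrow> (AE x in lborel. Lg h x = 0) \<Longrightarrow> LF h = 0"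
    using st unfolding stationary_constr_def by blast
  define c where "c = 1 / (4 * pi * G)"
  have c: "4 * pi * G * c = 1" unfolding c_def using G by simp
  define h where "h = (u, (\<lambda>x. c * wlap u x))"
  have h: "inS h" unfolding h_def inS_def using u L2_cmult[OF wlap_L2[OF u]] by simp
  have "AE x in lborel. Lg h x = 0"
    using frechet_poisson_residual[OF m y Lg h] unfolding h_def by (simp add: mult.assoc[symmetric] c)
  then have "LF h = 0" using ker[OF h] by simp
  then have "c * ip (\<lambda>x. a x - fst y x / 2) (wlap u) = ip u (snd y) / 2"
    using frechet_energy[OF a y LF h] unfolding h_def by (simp add: ip_scale_right)
  then have "4 * pi * G * (c * ip (\<lambda>x. a x - fst y x / 2) (wlap u)) = 4 * pi * G * (ip u (snd y) / 2)"
    by simp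
  then show ?thesis by (simp add: mult.assoc[symmetric] c)
qed

lemma stationary_lagrangian:
  assumes G: "0 < G" and a: "L2 a" and m: "lap m \<in> borel_measurable lborel"
    and st: "stationary_constr (energy a) (poisson_residual G m) y"
  defines "lam \<equiv> \<lambda>x. (a x - fst y x / 2) / (4 * pi * G)"
  shows "L2 lam" and "stationary (\<lambda>y'. energy a y' + ip lam (poisson_residual G m y')) y"
proof -
  have y: "inS y" and g0: "AE x in lborel. poisson_residual G m y x = 0"
    using st unfolding stationary_constr_def by blast+
  have A: "L2 (\<lambda>x. a x - fst y x / 2)"
    using L2_diff[OF a L2_cmult[OF H2_L2, of "fst y" "1/2"]] y unfolding inS_def by simp
  then show lam: "L2 lam"
    unfolding lam_def using L2_cmult[OF A, of "1 / (4 * pi * G)"] by simp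
  have "energy a (padd y h) + ip lam (poisson_residual G m (padd y h))
      - (energy a y + ip lam (poisson_residual G m y)) = - ip (fst h) (snd h) / 2" if h: "inS h" for h
  proof -
    have ip_lam: "4 * pi * G * ip lam f = ip (\<lambda>x. a x - fst y x / 2) f" for f
    proof -
      have "ip lam f = 1 / (4 * pi * G) * ip (\<lambda>x. a x - fst y x / 2) f"
        unfolding lam_def using ip_scale_left[of "1 / (4 * pi * G)" "\<lambda>x. a x - fst y x / 2" f] by simp
      then show ?thesis using G by simp
    qed
    have "4 * pi * G * ip lam (wlap (fst h)) = 4 * pi * G * (ip (fst h) (snd y) / 2)"
      using constrained_stationary_identity[OF G a m st, of "fst h"] h
      unfolding inS_def ip_lam by simp
    then have "ip lam (wlap (fst h)) = ip (fst h) (snd y) / 2" using G by simp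
    then have "ip lam (poisson_residual G m (padd y h)) - ip lam (poisson_residual G m y)
        = ip (fst h) (snd y) / 2 - ip (\<lambda>x. a x - fst y x / 2) (snd h)"
      using ip_poisson_residual[OF m y g0 lam h] ip_poisson_residual_eq_0[OF m y g0 lam] ip_lam
      by simp
    then show ?thesis using energy_increment[OF a y h] by simp
  qed
  then have "frechet_real (\<lambda>y'. energy a y' + ip lam (poisson_residual G m y')) y (\<lambda>h. 0)"
  proof (intro frechet_real_zeroI)
    fix h assume h: "inS h"
    have "\<bar>ip (fst h) (snd h)\<bar> / 2 \<le> pnorm h ^ 2"
      using abs_ip_le_pnorm[OF h] zero_le_power2[of "pnorm h"] by linarith
    then show "\<bar>energy a (padd y h) + ip lam (poisson_residual G m (padd y h))
        - (energy a y + ip lam (poisson_residual G m y))\<bar> \<le> pnorm h ^ 2"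
      using \<open>inS h \<Longrightarrow> _\<close>[OF h] by simp
  qed
  then show "stationary (\<lambda>y'. energy a y' + ip lam (poisson_residual G m y')) y"
    unfolding stationary_def using y by auto
qed

lemma stationary_lagrangian_weak_poisson:
  assumes a: "L2 a" and m: "lap m \<in> borel_measurable lborel" and y: "inS y"
    and g0: "AE x in lborel. poisson_residual G m y x = 0" and lam: "L2 lam"
    and st: "stationary (\<lambda>y'. energy a y' + ip lam (poisson_residual G m y')) y"
    and \<phi>: "test_fun \<phi>"
  shows "ip lam (lap \<phi>) = ip (\<lambda>x. snd y x / 2) \<phi>"
proof -
  obtain L where L: "frechet_real (\<lambda>y'. energy a y' + ip lam (poisson_residual G m y')) y L"
    and L0: "\<And>h. inS h \<Longrightarrow> L h = 0"
    using st unfolding stationary_def by blast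
  define h where "h = (\<phi>, (\<lambda>x::R3. 0::real))"
  have h: "inS h" unfolding h_def inS_def using test_fun_H2[OF \<phi>] L2_zero by simp
  have "L h = ip lam (wlap \<phi>) - ip \<phi> (snd y) / 2"
  proof (rule frechet_real_apply_eqI[OF L h, where B=0])
    fix t
    have "ip lam (poisson_residual G m (padd y (pscale t h))) = ip lam (wlap (\<lambda>x. t * \<phi> x))"
      using ip_poisson_residual[OF m y g0 lam inS_scale[OF h]] unfolding h_def pscale_def
      by (simp add: ip_zero_right)
    also have "\<dots> = t * ip lam (wlap \<phi>)"
      using wlap_cmult_AE[OF test_fun_H2[OF \<phi>]] L2_borel_measurable[OF lam]
        L2_borel_measurable[OF wlap_L2[OF H2_cmult[OF test_fun_H2[OF \<phi>]]]]
        L2_borel_measurable[OF wlap_L2[OF test_fun_H2[OF \<phi>]]]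
      by (subst ip_cong_AE[where h="\<lambda>x. t * wlap \<phi> x"]) (auto simp: ip_scale_right)
    finally show "energy a (padd y (pscale t h)) + ip lam (poisson_residual G m (padd y (pscale t h)))
        - (energy a y + ip lam (poisson_residual G m y)) = t * (ip lam (wlap \<phi>) - ip \<phi> (snd y) / 2) + t\<^sup>2 * 0"
      using energy_increment[OF a y inS_scale[OF h]] ip_poisson_residual_eq_0[OF m y g0 lam]
      unfolding h_def pscale_def
      by (simp add: ip_zero_right ip_scale_left algebra_simps)
  qed
  then have "ip lam (wlap \<phi>) = ip \<phi> (snd y) / 2" using L0[OF h] by simp
  moreover have "ip lam (lap \<phi>) = ip lam (wlap \<phi>)"
    using L2_borel_measurable[OF lam] lap_test_fun_borel_measurable[OF \<phi>]
      L2_borel_measurable[OF wlap_L2[OF test_fun_H2[OF \<phi>]]] wlap_test_fun_AE[OF \<phi>]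
    by (intro ip_cong_AE) auto
  moreover have "ip (\<lambda>x. snd y x / 2) \<phi> = ip \<phi> (snd y) / 2"
    using ip_scale_left[of "1/2" "snd y" \<phi>] ip_comm[of "snd y" \<phi>] by simp
  ultimately show ?thesis by simp
qed

end

theorem mainTheorem6:
  fixes G M R :: real and chi m a :: rfun and J :: "pair \<Rightarrow> real" and g :: "pair \<Rightarrow> rfun"
    and Phis rhos :: rfun
  assumes "G > 0" and "R > 0"
    and "test_fun chi" and "\<forall>x. norm x < R \<longrightarrow> chi x = 1"
    and "\<forall>x. m x = - (G * M / norm x) * (1 - chi x)"
    and "L2 a"
    and "\<forall>y. J y = ip (\<lambda>x. a x - fst y x / 2) (snd y)"
    and "\<forall>y. g y = (\<lambda>x. wlap (fst y) x + lap m x - 4 * pi * G * snd y x)"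
    and "stationary_constr J g (Phis, rhos)"
  shows "(\<exists>lam. L2 lam \<and>
            stationary (\<lambda>y. J y + ip lam (\<lambda>x. wlap (fst y) x + lap m x - 4 * pi * G * snd y x)) (Phis, rhos))
       \<and> (\<forall>lam. L2 lam \<and>
            stationary (\<lambda>y. J y + ip lam (\<lambda>x. wlap (fst y) x + lap m x - 4 * pi * G * snd y x)) (Phis, rhos)
          \<longrightarrow> (\<forall>\<phi>. test_fun \<phi> \<longrightarrow> ip lam (lap \<phi>) = ip (\<lambda>x. rhos x / 2) \<phi>))"
proof -
  interpret bump "\<lambda>x. chi x * chi x"
    using bump_square_plateau assms(2-4) by blast
  have J: "J = energy a" and g: "g = poisson_residual G m"
    using assms(7,8) by (auto simp: energy_def poisson_residual_def)
  have lagrangian: "(\<lambda>y. J y + ip lam (\<lambda>x. wlap (fst y) x + lap m x - 4 * pi * G * snd y x))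
      = (\<lambda>y. energy a y + ip lam (poisson_residual G m y))" for lam
    unfolding J poisson_residual_def ..
  have lap_m: "lap m \<in> borel_measurable lborel"
    using lap_far_field_borel_measurable[of chi R m "G * M"] assms(2-5) by (simp add: test_fun_def)
  have st: "stationary_constr (energy a) (poisson_residual G m) (Phis, rhos)"
    using assms(9) unfolding J g .
  then have y: "inS (Phis, rhos)" and g0: "AE x in lborel. poisson_residual G m (Phis, rhos) x = 0"
    unfolding stationary_constr_def by blast+
  show ?thesis
    unfolding lagrangian
    using stationary_lagrangian[OF assms(1,6) lap_m st]
      stationary_lagrangian_weak_poisson[OF assms(6) lap_m y g0]
    by auto
qed

end
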